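(* Let $m,k,n$ be natural numbers with $n\ge k+1$, and let $V_0,\ldots,V_{m-1}$ be $G$-representations over $K$. Then a tensor $\omega\in V_{[m]}$ has rank (respectively, border rank) at most $k$ if and only if for all $m$-tuples of $G$-linear maps $\phi_i:V_i\to K[G]^n$ ($i\in[m]$) the tensor $\phi_{[m]}(\omega)$ has rank (respectively, border rank) at most $k$. Moreover, if $\omega\in V_{[m]}$ has border rank at most $k$, then there exist $m$-tuples of $G$-linear maps $\phi_i:V_i\to K[G]^k$ and $\psi_i:K[G]^k\to V_i$ such that $\psi_{[m]}(\phi_{[m]}(\omega))=\omega$.
   Context: $G$ is a finite Abelian group; $K$ is an infinite field such that every finite-dimensional $G$-representation over $K$ is a direct sum of one-dimensional irreducible representations; $G$-representations are finite-dimensional. $K[G]$ denotes the regular representation of $G$. $[m]=\{0,\ldots,m-1\}$ and $V_{[m]}=\bigotimes_{i\in[m]}V_i$. For linear maps $\phi_i:V_i\to U_i$, $\phi_{[m]}=\bigotimes_i\phi_i:V_{[m]}\to U_{[m]}$ sends $\bigotimes_i v_i\mapsto\bigotimes_i\phi_i(v_i)$. The rank of a tensor is the minimal number of pure tensors summing to it; border rank at most $k$ means lying in the Zariski closure of the set of tensors of rank at most $k$. *)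

theory Defs
  imports "HOL-Algebra.Group" "HOL-Library.FuncSet"
begin

text \<open>A finite-dimensional vector space is K^I for a finite
 coordinate set I; a tensor in V_[m] = (x)_{i<m} K^{I i} is a function on index tuples
 in PiE {..<m} I, vanishing outside.\<close>

definition tidx :: "nat \<Rightarrow> (nat \<Rightarrow> 'a set) \<Rightarrow> (nat \<Rightarrow> 'a) set" where
  "tidx m I = PiE {..<m} I"

definition tensor_space :: "nat \<Rightarrow> (nat \<Rightarrow> 'a set) \<Rightarrow> ((nat \<Rightarrow> 'a) \<Rightarrow> 'k::field) set" where
  "tensor_space m I = {\<omega>. \<forall>j. j \<notin> tidx m I \<longrightarrow> \<omega> j = 0}"

definition pure_tensor :: "nat \<Rightarrow> (nat \<Rightarrow> 'a set) \<Rightarrow> (nat \<Rightarrow> 'a \<Rightarrow> 'k::field) \<Rightarrow> (nat \<Rightarrow> 'a) \<Rightarrow> 'k" where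
  "pure_tensor m I v = (\<lambda>j. if j \<in> tidx m I then (\<Prod>i<m. v i (j i)) else 0)"

definition rank_le :: "nat \<Rightarrow> (nat \<Rightarrow> 'a set) \<Rightarrow> nat \<Rightarrow> ((nat \<Rightarrow> 'a) \<Rightarrow> 'k::field) \<Rightarrow> bool" where
  "rank_le m I k \<omega> = (\<exists>v :: nat \<Rightarrow> nat \<Rightarrow> 'a \<Rightarrow> 'k. \<omega> = (\<lambda>j. \<Sum>r<k. pure_tensor m I (v r) j))"

inductive_set poly_fun :: "(('x \<Rightarrow> 'k::field) \<Rightarrow> 'k) set" where
  pf_const: "(\<lambda>_. c) \<in> poly_fun"
| pf_var: "(\<lambda>x. x j) \<in> poly_fun"
| pf_add: "p \<in> poly_fun \<Longrightarrow> q \<in> poly_fun \<Longrightarrow> (\<lambda>x. p x + q x) \<in> poly_fun"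
| pf_mult: "p \<in> poly_fun \<Longrightarrow> q \<in> poly_fun \<Longrightarrow> (\<lambda>x. p x * q x) \<in> poly_fun"

definition zariski_closure :: "(('x \<Rightarrow> 'k::field) set) \<Rightarrow> ('x \<Rightarrow> 'k) set" where
  "zariski_closure S = {x. \<forall>p\<in>poly_fun. (\<forall>s\<in>S. p s = 0) \<longrightarrow> p x = 0}"

definition border_rank_le :: "nat \<Rightarrow> (nat \<Rightarrow> 'a set) \<Rightarrow> nat \<Rightarrow> ((nat \<Rightarrow> 'a) \<Rightarrow> 'k::field) \<Rightarrow> bool" where
  "border_rank_le m I k \<omega> = (\<omega> \<in> zariski_closure {\<tau>. rank_le m I k \<tau>})"

text \<open>phi_[m]: phi i is the matrix of a linear map K^{I i} -> K^{J i}; phi i b a is the entry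
  at target coordinate b, source coordinate a.\<close>
definition tensor_map :: "nat \<Rightarrow> (nat \<Rightarrow> 'a set) \<Rightarrow> (nat \<Rightarrow> 'b set) \<Rightarrow> (nat \<Rightarrow> 'b \<Rightarrow> 'a \<Rightarrow> 'k::field)
     \<Rightarrow> ((nat \<Rightarrow> 'a) \<Rightarrow> 'k) \<Rightarrow> (nat \<Rightarrow> 'b) \<Rightarrow> 'k" where
  "tensor_map m I J \<phi> \<omega> = (\<lambda>j'. if j' \<in> tidx m J
      then (\<Sum>j\<in>tidx m I. (\<Prod>i<m. \<phi> i (j' i) (j i)) * \<omega> j) else 0)"

definition is_rep :: "('g, 'c) monoid_scheme \<Rightarrow> 'a set \<Rightarrow> ('g \<Rightarrow> 'a \<Rightarrow> 'a \<Rightarrow> 'k::field) \<Rightarrow> bool" where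
  "is_rep G I \<rho> \<longleftrightarrow> finite I \<and>
     (\<forall>a\<in>I. \<forall>b\<in>I. \<rho> \<one>\<^bsub>G\<^esub> a b = (if a = b then 1 else 0)) \<and>
     (\<forall>g\<in>carrier G. \<forall>h\<in>carrier G. \<forall>a\<in>I. \<forall>b\<in>I.
        \<rho> (g \<otimes>\<^bsub>G\<^esub> h) a b = (\<Sum>c\<in>I. \<rho> g a c * \<rho> h c b))"

text \<open>G-linear map K^I -> K^J (matrix f, f b a) intertwining rho and sigma\<close>
definition glin :: "('g, 'c) monoid_scheme \<Rightarrow> 'a set \<Rightarrow> ('g \<Rightarrow> 'a \<Rightarrow> 'a \<Rightarrow> 'k::field)
     \<Rightarrow> 'b set \<Rightarrow> ('g \<Rightarrow> 'b \<Rightarrow> 'b \<Rightarrow> 'k) \<Rightarrow> ('b \<Rightarrow> 'a \<Rightarrow> 'k) \<Rightarrow> bool" where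
  "glin G I \<rho> J \<sigma> f \<longleftrightarrow> (\<forall>g\<in>carrier G. \<forall>b\<in>J. \<forall>a\<in>I.
      (\<Sum>c\<in>J. \<sigma> g b c * f c a) = (\<Sum>c\<in>I. f b c * \<rho> g c a))"

text \<open>K[G]^n: coordinates G x {0..n-1}, g acts by e_(h,a) |-> e_(g h, a)\<close>
definition reg_idx :: "('g, 'c) monoid_scheme \<Rightarrow> nat \<Rightarrow> ('g \<times> nat) set" where
  "reg_idx G n = carrier G \<times> {..<n}"

definition reg_rep :: "('g, 'c) monoid_scheme \<Rightarrow> 'g \<Rightarrow> ('g \<times> nat) \<Rightarrow> ('g \<times> nat) \<Rightarrow> 'k::field" where
  "reg_rep G g x y = (if fst x = g \<otimes>\<^bsub>G\<^esub> fst y \<and> snd x = snd y then 1 else 0)"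

text \<open>K^{0..d-1} with rep rho is a direct sum of one-dimensional subrepresentations:
  there is a basis (columns of invertible P) of common eigenvectors.\<close>
definition splits_into_lines :: "('g, 'c) monoid_scheme \<Rightarrow> nat \<Rightarrow> ('g \<Rightarrow> nat \<Rightarrow> nat \<Rightarrow> 'k::field) \<Rightarrow> bool" where
  "splits_into_lines G d \<rho> \<longleftrightarrow> (\<exists>P Q :: nat \<Rightarrow> nat \<Rightarrow> 'k. \<exists>\<chi> :: nat \<Rightarrow> 'g \<Rightarrow> 'k.
     (\<forall>a<d. \<forall>b<d. (\<Sum>c<d. P a c * Q c b) = (if a = b then 1 else 0)) \<and>
     (\<forall>a<d. \<forall>b<d. (\<Sum>c<d. Q a c * P c b) = (if a = b then 1 else 0)) \<and>
     (\<forall>g\<in>carrier G. \<forall>a<d. \<forall>r<d. (\<Sum>c<d. \<rho> g a c * P c r) = \<chi> r g * P a r))"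

end

theory Submission
  imports Defs "Jordan_Normal_Form.Determinant"
begin

text \<open>Each \<open>V\<^sub>l\<close> splits into lines on which \<open>G\<close> acts by characters; grouping eigencoordinates
  with equal character gives the isotypic components, and \<open>|G|\<close> is invertible in \<open>K\<close> because
  \<open>K[G]\<close> itself splits. By Frobenius reciprocity a \<open>G\<close>-map \<open>V\<^sub>l \<rightarrow> K[G]\<^sup>n\<close> followed by one back
  is, in eigencoordinates, block diagonal with an arbitrary block of rank at most \<open>n\<close> on each
  isotypic component. So if every isotypic flattening of \<open>\<omega>\<close> has rank at most \<open>n\<close>, such maps
  reproduce \<open>\<omega>\<close> slot by slot, and (border) rank cannot increase along them. Conversely, an
  isotypic flattening of rank above \<open>k\<close> is carried by a \<open>G\<close>-map into \<open>K[G]\<^sup>n\<close>, \<open>n > k\<close>, to a tensor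
  with a nonzero \<open>(k+1)\<close>-minor in a flattening, a polynomial that vanishes on all tensors of rank
  at most \<open>k\<close> and hence on their Zariski closure.\<close>

lemma if_one_zero_mult: "(if P then 1 else 0) * x = (if P then x else (0::'a::semiring_1))"
  and mult_if_one_zero: "x * (if P then 1 else 0) = (if P then x else (0::'a::semiring_1))"
  by simp_all

lemma prod_if_one_zero:
  "finite A \<Longrightarrow> (\<Prod>i\<in>A. if P i then 1 else (0::'k::comm_semiring_1)) = (if \<forall>i\<in>A. P i then 1 else 0)"
  by (induction A rule: finite_induct) auto

lemma sum_if_subset:
  assumes "finite T" "S \<subseteq> T"
  shows "(\<Sum>j\<in>T. if j \<in> S then g j else 0) = sum g S"
  using sum.inter_restrict[OF assms(1), of g S, symmetric] Int_absorb1[OF assms(2)] by simp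

section \<open>Polynomial functions and determinants\<close>

lemma poly_fun_sum:
  "finite A \<Longrightarrow> (\<And>a. a \<in> A \<Longrightarrow> f a \<in> poly_fun) \<Longrightarrow> (\<lambda>x. \<Sum>a\<in>A. f a x) \<in> poly_fun"
  by (induction A rule: finite_induct) (auto intro: pf_add pf_const[of 0, simplified])

lemma poly_fun_prod:
  "finite A \<Longrightarrow> (\<And>a. a \<in> A \<Longrightarrow> f a \<in> poly_fun) \<Longrightarrow> (\<lambda>x. \<Prod>a\<in>A. f a x) \<in> poly_fun"
  by (induction A rule: finite_induct) (auto intro: pf_mult pf_const[of 1, simplified])

lemma poly_fun_linear_subst:
  assumes "p \<in> poly_fun" "finite F"
  shows "(\<lambda>\<tau>. p (\<lambda>x. \<Sum>j\<in>F. c x j * \<tau> j)) \<in> poly_fun"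
  using assms(1)
proof (induction p rule: poly_fun.induct)
  case (pf_var j)
  show ?case
    by (intro poly_fun_sum[OF assms(2)] poly_fun.pf_mult poly_fun.pf_const poly_fun.pf_var)
qed (auto intro: poly_fun.intros)

lemma poly_fun_det:
  assumes "\<And>a b. a < n \<Longrightarrow> b < n \<Longrightarrow> e a b \<in> poly_fun"
  shows "(\<lambda>\<tau>. det (mat n n (\<lambda>(a,b). e a b \<tau>))) \<in> poly_fun"
proof -
  have perm_range: "p i < n" if "p permutes {0..<n}" "i < n" for p i
    using that permutes_in_image[of p "{0..<n}"] by auto
  have "det (mat n n (\<lambda>(a,b). e a b \<tau>)) =
     (\<Sum>p\<in>{p. p permutes {0..<n}}. of_int (sign p) * (\<Prod>i=0..<n. e i (p i) \<tau>))" for \<tau>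
    by (subst det_def'[of _ n]) (auto intro!: sum.cong prod.cong simp: perm_range)
  moreover have "(\<lambda>\<tau>. \<Sum>p\<in>{p. p permutes {0..<n}}. of_int (sign p) * (\<Prod>i=0..<n. e i (p i) \<tau>))
      \<in> poly_fun"
    by (intro poly_fun_sum finite_permutations poly_fun.pf_mult poly_fun.pf_const poly_fun_prod assms)
      (auto simp: perm_range)
  ultimately show ?thesis by simp
qed

lemma det_rank_deficient:
  fixes X :: "nat \<Rightarrow> nat \<Rightarrow> 'k::comm_ring_1"
  shows "det (mat (Suc k) (Suc k) (\<lambda>(a,b). \<Sum>q<k. X a q * Y q b)) = 0"
proof -
  let ?n = "Suc k"
  let ?A = "mat ?n ?n (\<lambda>(a,q). if q < k then X a q else 0)"
  let ?B = "mat ?n ?n (\<lambda>(q,b). if q < k then Y q b else 0)"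
  have AB: "mat ?n ?n (\<lambda>(a,b). \<Sum>q<k. X a q * Y q b) = ?A * ?B"
  proof (rule eq_matI)
    fix i j assume i: "i < dim_row (?A * ?B)" and j: "j < dim_col (?A * ?B)"
    have "(?A * ?B) $$ (i,j) = (\<Sum>q\<in>{0..<?n}. if q < k then X i q * Y q j else 0)"
      using i j by (auto simp: scalar_prod_def intro!: sum.cong)
    also have "\<dots> = (\<Sum>q<k. X i q * Y q j)"
      by (rule sum.mono_neutral_cong_right) auto
    finally show "mat ?n ?n (\<lambda>(a,b). \<Sum>q<k. X a q * Y q b) $$ (i,j) = (?A * ?B) $$ (i,j)"
      using i j by simp
  qed auto
  have "det ?B = 0"
  proof -
    have "(\<Prod>i=0..<?n. ?B $$ (i, p i)) = 0" if "p permutes {0..<?n}" for p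
      using that permutes_in_image[of p "{0..<?n}" k] by (intro prod_zero bexI[of _ k]) auto
    then show ?thesis by (subst det_def'[of _ ?n]) auto
  qed
  then show ?thesis unfolding AB by (subst det_mult[of _ ?n]) auto
qed


section \<open>Tensor maps\<close>

lemma finite_tidx: "(\<forall>i<m. finite (I i)) \<Longrightarrow> finite (tidx m I)"
  unfolding tidx_def by (rule finite_PiE) auto

lemma tensor_map_pure_tensor:
  assumes fin: "\<forall>i<m. finite (I i)" and x: "x \<in> tidx m J"
  shows "tensor_map m I J \<phi> (pure_tensor m I v) x = (\<Prod>i<m. \<Sum>a\<in>I i. \<phi> i (x i) a * v i a)"
proof -
  have "tensor_map m I J \<phi> (pure_tensor m I v) x =
        (\<Sum>j\<in>tidx m I. (\<Prod>i<m. \<phi> i (x i) (j i) * v i (j i)))"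
    using x unfolding tensor_map_def pure_tensor_def by (auto intro: sum.cong simp: prod.distrib)
  also have "\<dots> = (\<Prod>i<m. \<Sum>a\<in>I i. \<phi> i (x i) a * v i a)"
    unfolding tidx_def by (rule prod_sum_PiE[symmetric]) (use fin in auto)
  finally show ?thesis .
qed

lemma rank_le_tensor_map:
  assumes fin: "\<forall>i<m. finite (I i)" and "rank_le m I k \<omega>"
  shows "rank_le m J k (tensor_map m I J \<phi> \<omega>)"
proof -
  obtain v where v: "\<omega> = (\<lambda>j. \<Sum>r<k. pure_tensor m I (v r) j)"
    using assms(2) unfolding rank_le_def by blast
  define w where "w r i b = (\<Sum>a\<in>I i. \<phi> i b a * v r i a)" for r i b
  have "tensor_map m I J \<phi> \<omega> x = (\<Sum>r<k. pure_tensor m J (w r) x)" for x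
  proof (cases "x \<in> tidx m J")
    case True
    have "tensor_map m I J \<phi> \<omega> x = (\<Sum>r<k. tensor_map m I J \<phi> (pure_tensor m I (v r)) x)"
      unfolding v tensor_map_def using True
      by (simp add: sum_distrib_left) (rule sum.swap)
    then show ?thesis
      using True by (simp add: tensor_map_pure_tensor[OF fin True] pure_tensor_def[of m J] w_def)
  qed (simp add: tensor_map_def pure_tensor_def)
  then show ?thesis unfolding rank_le_def by blast
qed

lemma rank_le_imp_border_rank_le: "rank_le m I k \<omega> \<Longrightarrow> border_rank_le m I k \<omega>"
  unfolding border_rank_le_def zariski_closure_def by auto

lemma border_rank_le_tensor_map:
  fixes \<omega> :: "(nat \<Rightarrow> 'b) \<Rightarrow> 'k::field" and \<phi> :: "nat \<Rightarrow> 'c \<Rightarrow> 'b \<Rightarrow> 'k"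
  assumes fin: "\<forall>i<m. finite (I i)" and "border_rank_le m I k \<omega>"
  shows "border_rank_le m J k (tensor_map m I J \<phi> \<omega>)"
  unfolding border_rank_le_def zariski_closure_def
proof (intro CollectI ballI impI)
  fix p :: "((nat \<Rightarrow> 'c) \<Rightarrow> 'k) \<Rightarrow> 'k"
  assume p: "p \<in> poly_fun" and van: "\<forall>\<tau>\<in>{\<tau>. rank_le m J k \<tau>}. p \<tau> = 0"
  have "tensor_map m I J \<phi> = (\<lambda>\<tau> x. \<Sum>j\<in>tidx m I.
      (if x \<in> tidx m J then \<Prod>i<m. \<phi> i (x i) (j i) else 0) * \<tau> j)"
    unfolding tensor_map_def by (intro ext) auto
  then have q: "(\<lambda>\<tau>. p (tensor_map m I J \<phi> \<tau>)) \<in> poly_fun"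
    using poly_fun_linear_subst[OF p finite_tidx[OF fin]] by simp
  have van': "p (tensor_map m I J \<phi> \<tau>) = 0" if "rank_le m I k \<tau>" for \<tau>
    using van rank_le_tensor_map[OF fin that, of J \<phi>] by simp
  have closure: "\<forall>q\<in>poly_fun. (\<forall>\<tau>\<in>{\<tau>. rank_le m I k \<tau>}. q \<tau> = 0) \<longrightarrow> q \<omega> = 0"
    using assms(2) unfolding border_rank_le_def zariski_closure_def by (rule CollectD)
  show "p (tensor_map m I J \<phi> \<omega>) = 0"
    using closure[rule_format, OF q] van' by blast
qed

lemma tensor_map_cong:
  assumes "\<forall>i<m. \<forall>b\<in>J i. \<forall>a\<in>I i. \<phi> i b a = \<phi>' i b a"
  shows "tensor_map m I J \<phi> = tensor_map m I J \<phi>'"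
  using assms unfolding tensor_map_def tidx_def by (auto intro!: ext sum.cong prod.cong simp: PiE_iff)

lemma tensor_map_tensor_map:
  assumes finJ: "\<forall>i<m. finite (J i)"
  shows "tensor_map m J L \<psi> (tensor_map m I J \<phi> \<omega>) =
         tensor_map m I L (\<lambda>i b a. \<Sum>c\<in>J i. \<psi> i b c * \<phi> i c a) \<omega>"
proof
  fix x
  show "tensor_map m J L \<psi> (tensor_map m I J \<phi> \<omega>) x =
         tensor_map m I L (\<lambda>i b a. \<Sum>c\<in>J i. \<psi> i b c * \<phi> i c a) \<omega> x"
  proof (cases "x \<in> tidx m L")
    case True
    have "tensor_map m J L \<psi> (tensor_map m I J \<phi> \<omega>) x = (\<Sum>j'\<in>tidx m J.
        (\<Prod>i<m. \<psi> i (x i) (j' i)) * (\<Sum>j\<in>tidx m I. (\<Prod>i<m. \<phi> i (j' i) (j i)) * \<omega> j))"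
      using True unfolding tensor_map_def by (auto intro!: sum.cong)
    also have "\<dots> = (\<Sum>j\<in>tidx m I.
        (\<Sum>j'\<in>tidx m J. (\<Prod>i<m. \<psi> i (x i) (j' i) * \<phi> i (j' i) (j i))) * \<omega> j)"
      by (simp add: sum_distrib_left sum_distrib_right sum.swap[of _ "tidx m J"] prod.distrib mult.assoc)
    also have "\<dots> = (\<Sum>j\<in>tidx m I. (\<Prod>i<m. \<Sum>c\<in>J i. \<psi> i (x i) c * \<phi> i c (j i)) * \<omega> j)"
      unfolding tidx_def by (subst prod_sum_PiE) (use finJ in auto)
    finally show ?thesis
      using True unfolding tensor_map_def by simp
  qed (simp add: tensor_map_def)
qed

abbreviation id_matrix :: "'a \<Rightarrow> 'a \<Rightarrow> 'k::zero_neq_one" where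
  "id_matrix \<equiv> \<lambda>b a. if b = a then 1 else 0"

lemma tidx_eq_iff:
  assumes x: "x \<in> tidx m I" and j: "j \<in> tidx m I"
  shows "(\<forall>i\<in>{..<m}. x i = j i) \<longleftrightarrow> j = x"
proof
  assume eq: "\<forall>i\<in>{..<m}. x i = j i"
  show "j = x"
  proof
    fix i show "j i = x i"
      using x j eq unfolding tidx_def by (cases "i < m") (auto simp: PiE_iff extensional_def)
  qed
qed auto

lemma tensor_map_id:
  fixes \<omega> :: "(nat \<Rightarrow> 'b) \<Rightarrow> 'k::field"
  assumes fin: "\<forall>i<m. finite (I i)" and w: "\<omega> \<in> tensor_space m I"
  shows "tensor_map m I I (\<lambda>i. id_matrix) \<omega> = \<omega>"
proof
  fix x
  show "tensor_map m I I (\<lambda>i. id_matrix) \<omega> x = \<omega> x"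
  proof (cases "x \<in> tidx m I")
    case True
    have "(\<Prod>i<m. if x i = j i then 1 else 0) = (if j = x then (1::'k) else 0)"
      if "j \<in> tidx m I" for j
      using tidx_eq_iff[OF True that] by (simp add: prod_if_one_zero)
    then have "tensor_map m I I (\<lambda>i. id_matrix) \<omega> x = (\<Sum>j\<in>tidx m I. (if j = x then 1 else 0) * \<omega> j)"
      using True unfolding tensor_map_def by (auto intro!: sum.cong)
    then show ?thesis
      using True finite_tidx[OF fin] by (simp add: if_one_zero_mult)
  next
    case False
    then show ?thesis using w unfolding tensor_map_def tensor_space_def by simp
  qed
qed

lemma sum_tidx_single_slot:
  fixes f :: "'b \<Rightarrow> 'k::field"
  assumes fin: "\<forall>i<m. finite (I i)" and l: "l < m" and x: "x \<in> tidx m I"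
  shows "(\<Sum>j\<in>tidx m I. (\<Prod>i<m. if i = l then f (j i) else (if j i = x i then 1 else 0)) * h j)
         = (\<Sum>y\<in>I l. f y * h (x(l:=y)))"
proof -
  let ?S = "(\<lambda>y. x(l:=y)) ` I l"
  have prod_eq: "(\<Prod>i<m. if i = l then f (j i) else (if j i = x i then 1 else 0))
      = (if j \<in> ?S then f (j l) else 0)" if j: "j \<in> tidx m I" for j
  proof -
    have "(\<Prod>i<m. if i = l then f (j i) else (if j i = x i then 1 else 0))
       = f (j l) * (\<Prod>i\<in>{..<m}-{l}. if j i = x i then 1 else 0)"
      using l by (subst prod.remove[of _ l]) (auto intro!: prod.cong)
    also have "\<dots> = f (j l) * (if \<forall>i\<in>{..<m}-{l}. j i = x i then 1 else 0)"
      by (simp add: prod_if_one_zero)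
    also have "(\<forall>i\<in>{..<m}-{l}. j i = x i) \<longleftrightarrow> j \<in> ?S"
    proof
      assume eq: "\<forall>i\<in>{..<m}-{l}. j i = x i"
      have "j = x(l := j l)"
      proof
        fix i show "j i = (x(l := j l)) i"
          using eq j x unfolding tidx_def by (cases "i < m") (auto simp: PiE_iff extensional_def)
      qed
      moreover have "j l \<in> I l" using j l unfolding tidx_def by auto
      ultimately show "j \<in> ?S" by blast
    qed (auto split: if_splits)
    finally show ?thesis by simp
  qed
  have sub: "?S \<subseteq> tidx m I"
    using x l unfolding tidx_def by (auto simp: PiE_iff extensional_def split: if_splits)
  have "(\<Sum>j\<in>tidx m I. (\<Prod>i<m. if i = l then f (j i) else (if j i = x i then 1 else 0)) * h j)
      = (\<Sum>j\<in>tidx m I. if j \<in> ?S then f (j l) * h j else 0)"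
    by (rule sum.cong) (auto simp: prod_eq)
  also have "\<dots> = (\<Sum>j\<in>?S. f (j l) * h j)"
    by (rule sum_if_subset[OF finite_tidx[OF fin] sub])
  also have "\<dots> = (\<Sum>y\<in>I l. f y * h (x(l:=y)))"
    by (subst sum.reindex) (auto simp: inj_on_def fun_eq_iff dest: fun_cong[where x=l])
  finally show ?thesis .
qed

lemma tensor_map_single_slot:
  fixes E :: "'b \<Rightarrow> 'b \<Rightarrow> 'k::field"
  assumes fin: "\<forall>i<m. finite (I i)" and l: "l < m" and x: "x \<in> tidx m I"
  shows "tensor_map m I I (\<lambda>i. if i = l then E else id_matrix) \<omega> x = (\<Sum>y\<in>I l. E (x l) y * \<omega> (x(l:=y)))"
proof -
  have "tensor_map m I I (\<lambda>i. if i = l then E else id_matrix) \<omega> x =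
     (\<Sum>j\<in>tidx m I. (\<Prod>i<m. if i = l then E (x l) (j i) else (if j i = x i then 1 else 0)) * \<omega> j)"
    using x unfolding tensor_map_def by (auto intro!: sum.cong prod.cong)
  then show ?thesis by (simp add: sum_tidx_single_slot[OF fin l x])
qed

lemma tensor_map_fixes_if_slotwise:
  fixes E :: "nat \<Rightarrow> 'b \<Rightarrow> 'b \<Rightarrow> 'k::field"
  assumes fin: "\<forall>i<m. finite (I i)" and w: "\<omega> \<in> tensor_space m I"
    and fixes_slot: "\<forall>l<m. tensor_map m I I (\<lambda>i. if i = l then E l else id_matrix) \<omega> = \<omega>"
  shows "tensor_map m I I E \<omega> = \<omega>"
proof -
  have first_slots: "tensor_map m I I (\<lambda>i. if i < p then E i else id_matrix) \<omega> = \<omega>"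
    if "p \<le> m" for p
    using that
  proof (induction p)
    case 0
    then show ?case using tensor_map_id[OF fin w] by simp
  next
    case (Suc p)
    let ?Ep = "\<lambda>i. if i < p then E i else id_matrix"
    let ?D = "\<lambda>i. if i = p then E p else id_matrix"
    have "tensor_map m I I (\<lambda>i. if i < Suc p then E i else id_matrix)
        = tensor_map m I I (\<lambda>i b a. \<Sum>c\<in>I i. ?Ep i b c * ?D i c a)" (is "?lhs = ?rhs")
    proof (rule tensor_map_cong, intro allI impI ballI)
      fix i b a assume i: "i < m" and b: "b \<in> I i" and a: "a \<in> I i"
      have finIi: "finite (I i)" using fin i by auto
      have "(\<Sum>c\<in>I i. ?Ep i b c * ?D i c a) =
          (if i < p then E i b a else if i = p then E p b a else id_matrix b a)"
      proof (cases "i < p")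
        case True
        then have "?Ep i b c * ?D i c a = (if c = a then E i b c else 0)" for c by simp
        then show ?thesis using True finIi a by simp
      next
        case False
        then have "?Ep i b c * ?D i c a = (if b = c then ?D i c a else 0)" for c by simp
        then show ?thesis using False finIi b by simp
      qed
      then show "(if i < Suc p then E i else id_matrix) b a = (\<Sum>c\<in>I i. ?Ep i b c * ?D i c a)"
        by (simp add: less_Suc_eq)
    qed
    then have "?lhs \<omega> = ?rhs \<omega>" by simp
    also have "\<dots> = tensor_map m I I ?Ep (tensor_map m I I ?D \<omega>)"
      by (rule tensor_map_tensor_map[symmetric]) (use fin in auto)
    also have "tensor_map m I I ?D \<omega> = \<omega>" using fixes_slot Suc by auto
    finally show ?case using Suc by simp
  qed
  have "tensor_map m I I E \<omega> = tensor_map m I I (\<lambda>i. if i < m then E i else id_matrix) \<omega>"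
    by (rule fun_cong[OF tensor_map_cong]) simp
  also have "\<dots> = \<omega>" by (rule first_slots) simp
  finally show ?thesis .
qed

section \<open>Row rank and unit minors\<close>

definition row_rank_le :: "nat \<Rightarrow> 'r set \<Rightarrow> 'c set \<Rightarrow> ('r \<Rightarrow> 'c \<Rightarrow> 'k::field) \<Rightarrow> bool" where
  "row_rank_le k R C M \<longleftrightarrow>
     (\<exists>A B. \<forall>r\<in>R. \<forall>c\<in>C. M r c = (\<Sum>s<k. A r s * (\<Sum>r'\<in>R. B s r' * M r' c)))"

lemma row_rank_le_mono:
  assumes "row_rank_le k R C M" "k \<le> k'"
  shows "row_rank_le k' R C M"
proof -
  obtain A B where AB: "\<forall>r\<in>R. \<forall>c\<in>C. M r c = (\<Sum>s<k. A r s * (\<Sum>r'\<in>R. B s r' * M r' c))"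
    using assms(1) unfolding row_rank_le_def by blast
  let ?A = "\<lambda>r s. if s < k then A r s else 0"
  have "(\<Sum>s<k'. ?A r s * X s) = (\<Sum>s<k. A r s * X s)" for r X
    by (rule sum.mono_neutral_cong_right) (use assms(2) in auto)
  then show ?thesis
    unfolding row_rank_le_def using AB by (intro exI[where x="?A"] exI[where x=B]) simp
qed

definition has_unit_minor :: "nat \<Rightarrow> 'r set \<Rightarrow> 'c set \<Rightarrow> ('r \<Rightarrow> 'c \<Rightarrow> 'k::field) \<Rightarrow> bool" where
  "has_unit_minor k R C M \<longleftrightarrow> (\<exists>L c. (\<forall>b<k. c b \<in> C) \<and>
     (\<forall>a<k. \<forall>b<k. (\<Sum>r\<in>R. L a r * M r (c b)) = (if a = b then 1 else 0)))"

text \<open>One step of Gaussian elimination: if the rows of \<open>M\<close> do not factor through the \<open>k\<close> row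
  combinations \<open>L\<close>, the residual \<open>M'\<close> has a nonzero entry, which enlarges the unit minor.\<close>

lemma has_unit_minor_Suc:
  fixes M :: "'r \<Rightarrow> 'c \<Rightarrow> 'k::field"
  assumes finR: "finite R" and minor: "has_unit_minor k R C M" and not_rank: "\<not> row_rank_le k R C M"
  shows "has_unit_minor (Suc k) R C M"
proof -
  note sum.lessThan_Suc[simp del] lessThan_Suc[simp del]
  obtain L c where cC: "\<forall>b<k. c b \<in> C"
    and LM: "\<forall>a<k. \<forall>b<k. (\<Sum>r\<in>R. L a r * M r (c b)) = (if a = b then 1 else 0)"
    using minor unfolding has_unit_minor_def by blast
  define M' where "M' r x = M r x - (\<Sum>a<k. M r (c a) * (\<Sum>r'\<in>R. L a r' * M r' x))" for r x
  have "\<not> (\<forall>r\<in>R. \<forall>x\<in>C. M' r x = 0)"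
  proof
    assume "\<forall>r\<in>R. \<forall>x\<in>C. M' r x = 0"
    then have "row_rank_le k R C M"
      unfolding row_rank_le_def M'_def by (intro exI[where x="\<lambda>r a. M r (c a)"] exI[where x=L]) simp
    then show False using not_rank by simp
  qed
  then obtain r0 c0 where r0: "r0 \<in> R" and c0: "c0 \<in> C" and nz: "M' r0 c0 \<noteq> 0" by blast
  define v where "v r = ((if r = r0 then 1 else 0) - (\<Sum>a<k. M r0 (c a) * L a r)) / M' r0 c0" for r
  have vM: "(\<Sum>r\<in>R. v r * M r x) = M' r0 x / M' r0 c0" for x
  proof -
    have "v r * M r x = ((if r = r0 then 1 else 0) * M r x - (\<Sum>a<k. M r0 (c a) * L a r * M r x)) / M' r0 c0" for r
      unfolding v_def by (simp add: left_diff_distrib sum_distrib_right)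
    then have "(\<Sum>r\<in>R. v r * M r x) = ((\<Sum>r\<in>R. (if r = r0 then 1 else 0) * M r x)
              - (\<Sum>r\<in>R. \<Sum>a<k. M r0 (c a) * L a r * M r x)) / M' r0 c0"
      by (simp add: sum_divide_distrib[symmetric] sum_subtractf)
    also have "(\<Sum>r\<in>R. (if r = r0 then 1 else 0) * M r x) = M r0 x"
      using finR r0 by (simp add: if_one_zero_mult)
    also have "(\<Sum>r\<in>R. \<Sum>a<k. M r0 (c a) * L a r * M r x) = (\<Sum>a<k. M r0 (c a) * (\<Sum>r'\<in>R. L a r' * M r' x))"
      by (subst sum.swap) (simp add: sum_distrib_left mult.assoc)
    finally show ?thesis unfolding M'_def by simp
  qed
  have "M' r0 (c b) = 0" if b: "b < k" for b
  proof -
    have "(\<Sum>a<k. M r0 (c a) * (\<Sum>r'\<in>R. L a r' * M r' (c b))) = (\<Sum>a<k. M r0 (c a) * (if a = b then 1 else 0))"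
      using LM b by (intro sum.cong) auto
    also have "\<dots> = M r0 (c b)" using b by (simp add: mult_if_one_zero)
    finally show ?thesis unfolding M'_def by simp
  qed
  then have vc: "(\<Sum>r\<in>R. v r * M r (c b)) = 0" if "b < k" for b
    using vM that by simp
  have vc0: "(\<Sum>r\<in>R. v r * M r c0) = 1"
    using vM nz by simp
  define w where "w a = (\<Sum>r\<in>R. L a r * M r c0)" for a
  define L' where "L' a r = (if a < k then L a r - w a * v r else v r)" for a r
  define c' where "c' b = (if b < k then c b else c0)" for b
  have L'M: "(\<Sum>r\<in>R. L' a r * M r x) = (if a < k then (\<Sum>r\<in>R. L a r * M r x) - w a * (\<Sum>r\<in>R. v r * M r x)
                  else (\<Sum>r\<in>R. v r * M r x))" for a x
    unfolding L'_def by (simp add: left_diff_distrib sum_subtractf sum_distrib_left mult.assoc)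
  have "(\<Sum>r\<in>R. L' a r * M r (c' b)) = (if a = b then 1 else 0)" if "a < Suc k" "b < Suc k" for a b
    using that LM vc vc0 unfolding L'M c'_def w_def by (auto simp: less_Suc_eq)
  moreover have "\<forall>b<Suc k. c' b \<in> C" using cC c0 unfolding c'_def by auto
  ultimately show ?thesis unfolding has_unit_minor_def by blast
qed

lemma has_unit_minor_if_not_row_rank_le:
  assumes "finite R" "\<not> row_rank_le k R C M"
  shows "has_unit_minor (Suc k) R C M"
proof -
  have "has_unit_minor j R C M" if "j \<le> Suc k" for j
    using that
  proof (induction j)
    case 0
    then show ?case unfolding has_unit_minor_def by simp
  next
    case (Suc j)
    have "\<not> row_rank_le j R C M" using assms(2) row_rank_le_mono Suc.prems by fastforce
    then show ?case using has_unit_minor_Suc[OF assms(1)] Suc by simp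
  qed
  then show ?thesis by simp
qed

section \<open>Representations and eigenbases\<close>

lemma is_rep_finite: "is_rep G I \<rho> \<Longrightarrow> finite I"
  and is_rep_one: "is_rep G I \<rho> \<Longrightarrow> x \<in> I \<Longrightarrow> y \<in> I \<Longrightarrow> \<rho> \<one>\<^bsub>G\<^esub> x y = (if x = y then 1 else 0)"
  and is_rep_mult: "is_rep G I \<rho> \<Longrightarrow> g \<in> carrier G \<Longrightarrow> h \<in> carrier G \<Longrightarrow> x \<in> I \<Longrightarrow> y \<in> I \<Longrightarrow>
    \<rho> (g \<otimes>\<^bsub>G\<^esub> h) x y = (\<Sum>c\<in>I. \<rho> g x c * \<rho> h c y)"
  unfolding is_rep_def by auto

text \<open>The columns of \<open>P\<close> form a basis of common eigenvectors, \<open>\<chi> r\<close> being the eigenvalue of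
  column \<open>r\<close>, and \<open>Q\<close> is the inverse matrix; this is \<open>splits_into_lines\<close> transported to an
  arbitrary finite coordinate set.\<close>

definition eigenbasis :: "('g,'c) monoid_scheme \<Rightarrow> 'b set \<Rightarrow> ('g \<Rightarrow> 'b \<Rightarrow> 'b \<Rightarrow> 'k::field) \<Rightarrow> nat
   \<Rightarrow> ('b \<Rightarrow> nat \<Rightarrow> 'k) \<Rightarrow> (nat \<Rightarrow> 'b \<Rightarrow> 'k) \<Rightarrow> (nat \<Rightarrow> 'g \<Rightarrow> 'k) \<Rightarrow> bool" where
  "eigenbasis G I \<rho> d P Q \<chi> \<longleftrightarrow>
     (\<forall>x\<in>I. \<forall>y\<in>I. (\<Sum>r<d. P x r * Q r y) = (if x = y then 1 else 0)) \<and>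
     (\<forall>r<d. \<forall>s<d. (\<Sum>x\<in>I. Q r x * P x s) = (if r = s then 1 else 0)) \<and>
     (\<forall>g\<in>carrier G. \<forall>x\<in>I. \<forall>r<d. (\<Sum>y\<in>I. \<rho> g x y * P y r) = \<chi> r g * P x r)"

lemma eigenbasis_PQ: "eigenbasis G I \<rho> d P Q \<chi> \<Longrightarrow> x \<in> I \<Longrightarrow> y \<in> I \<Longrightarrow>
    (\<Sum>r<d. P x r * Q r y) = (if x = y then 1 else 0)"
  and eigenbasis_QP: "eigenbasis G I \<rho> d P Q \<chi> \<Longrightarrow> r < d \<Longrightarrow> s < d \<Longrightarrow>
    (\<Sum>x\<in>I. Q r x * P x s) = (if r = s then 1 else 0)"
  and eigenbasis_eigen: "eigenbasis G I \<rho> d P Q \<chi> \<Longrightarrow> g \<in> carrier G \<Longrightarrow> x \<in> I \<Longrightarrow> r < d \<Longrightarrow>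
    (\<Sum>y\<in>I. \<rho> g x y * P y r) = \<chi> r g * P x r"
  unfolding eigenbasis_def by auto

lemma is_rep_reindex:
  assumes bij: "bij_betw e A I" and rep: "is_rep G I \<rho>"
  shows "is_rep G A (\<lambda>g a b. \<rho> g (e a) (e b))"
  unfolding is_rep_def
proof (intro conjI ballI)
  show "finite A" using bij_betw_finite[OF bij] is_rep_finite[OF rep] by simp
next
  fix a b assume "a \<in> A" "b \<in> A"
  then show "\<rho> \<one>\<^bsub>G\<^esub> (e a) (e b) = (if a = b then 1 else 0)"
    using is_rep_one[OF rep] bij_betw_apply[OF bij] bij_betw_imp_inj_on[OF bij] by (auto simp: inj_on_def)
next
  fix g h a b assume "g \<in> carrier G" "h \<in> carrier G" "a \<in> A" "b \<in> A"
  then show "\<rho> (g \<otimes>\<^bsub>G\<^esub> h) (e a) (e b) = (\<Sum>c\<in>A. \<rho> g (e a) (e c) * \<rho> h (e c) (e b))"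
    using is_rep_mult[OF rep] bij_betw_apply[OF bij]
      sum.reindex_bij_betw[OF bij, of "\<lambda>c. \<rho> g (e a) c * \<rho> h c (e b)"] by simp
qed

lemma eigenbasis_exists:
  fixes G :: "('g,'c) monoid_scheme" and \<rho> :: "'g \<Rightarrow> 'b \<Rightarrow> 'b \<Rightarrow> 'k::field"
  assumes K_split: "\<forall>d (\<sigma> :: 'g \<Rightarrow> nat \<Rightarrow> nat \<Rightarrow> 'k). is_rep G {..<d} \<sigma> \<longrightarrow> splits_into_lines G d \<sigma>"
    and rep: "is_rep G I \<rho>"
  shows "\<exists>d P Q \<chi>. eigenbasis G I \<rho> d P Q \<chi>"
proof -
  define d where "d = card I"
  obtain e where bij: "bij_betw e {..<d} I"
    using finite_same_card_bij[of "{..<d}" I] is_rep_finite[OF rep] unfolding d_def by auto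
  define e' where "e' = inv_into {..<d} e"
  have bij': "bij_betw e' I {..<d}" unfolding e'_def by (rule bij_betw_inv_into[OF bij])
  have ee': "\<And>x. x \<in> I \<Longrightarrow> e (e' x) = x" unfolding e'_def using bij bij_betw_inv_into_right by metis
  have e'e: "\<And>a. a < d \<Longrightarrow> e' (e a) = a" unfolding e'_def using bij bij_betw_inv_into_left by (metis lessThan_iff)
  have e'I: "\<And>x. x \<in> I \<Longrightarrow> e' x < d" using bij' bij_betw_apply by fastforce
  define \<sigma> where "\<sigma> g a b = \<rho> g (e a) (e b)" for g a b
  have "is_rep G {..<d} \<sigma>"
    unfolding \<sigma>_def by (rule is_rep_reindex[OF bij rep])
  then obtain P0 Q0 \<chi> where
    PQ: "\<forall>a<d. \<forall>b<d. (\<Sum>c<d. P0 a c * Q0 c b) = (if a = b then 1 else 0)" and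
    QP: "\<forall>a<d. \<forall>b<d. (\<Sum>c<d. Q0 a c * P0 c b) = (if a = b then 1 else 0)" and
    eig: "\<forall>g\<in>carrier G. \<forall>a<d. \<forall>r<d. (\<Sum>c<d. \<sigma> g a c * P0 c r) = \<chi> r g * P0 a r"
    using K_split unfolding splits_into_lines_def by blast
  define P where "P x r = P0 (e' x) r" for x r
  define Q where "Q r x = Q0 r (e' x)" for r x
  have "eigenbasis G I \<rho> d P Q \<chi>"
    unfolding eigenbasis_def
  proof (intro conjI ballI allI impI)
    fix x y assume "x \<in> I" "y \<in> I"
    then show "(\<Sum>r<d. P x r * Q r y) = (if x = y then 1 else 0)"
      unfolding P_def Q_def using PQ e'I ee' by metis
  next
    fix r s assume "r < d" "s < d"
    then show "(\<Sum>x\<in>I. Q r x * P x s) = (if r = s then 1 else 0)"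
      unfolding P_def Q_def using QP sum.reindex_bij_betw[OF bij', of "\<lambda>a. Q0 r a * P0 a s"] by simp
  next
    fix g x r assume g: "g \<in> carrier G" and x: "x \<in> I" and r: "r < d"
    have "(\<Sum>y\<in>I. \<rho> g x y * P y r) = (\<Sum>c\<in>{..<d}. \<rho> g x (e c) * P (e c) r)"
      by (rule sum.reindex_bij_betw[OF bij, symmetric])
    also have "\<dots> = (\<Sum>c<d. \<sigma> g (e' x) c * P0 c r)"
      unfolding \<sigma>_def P_def using ee'[OF x] e'e by (intro sum.cong) auto
    also have "\<dots> = \<chi> r g * P x r" using eig g e'I[OF x] r unfolding P_def by simp
    finally show "(\<Sum>y\<in>I. \<rho> g x y * P y r) = \<chi> r g * P x r" .
  qed
  then show ?thesis by blast
qed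

lemma eigenbasis_left_eigen:
  fixes \<rho> :: "'g \<Rightarrow> 'b \<Rightarrow> 'b \<Rightarrow> 'k::field"
  assumes rep: "is_rep G I \<rho>" and eb: "eigenbasis G I \<rho> d P Q \<chi>" and r: "r < d"
    and g: "g \<in> carrier G" and x: "x \<in> I"
  shows "(\<Sum>y\<in>I. Q r y * \<rho> g y x) = \<chi> r g * Q r x"
proof -
  have fin: "finite I" using rep by (rule is_rep_finite)
  have expand: "\<rho> g y x = (\<Sum>s<d. (\<Sum>z\<in>I. \<rho> g y z * P z s) * Q s x)" for y
  proof -
    have "(\<Sum>s<d. (\<Sum>z\<in>I. \<rho> g y z * P z s) * Q s x) = (\<Sum>z\<in>I. \<rho> g y z * (\<Sum>s<d. P z s * Q s x))"
      by (simp add: sum_distrib_left sum_distrib_right mult.assoc sum.swap[of _ I])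
    also have "\<dots> = (\<Sum>z\<in>I. \<rho> g y z * (if z = x then 1 else 0))"
      using eigenbasis_PQ[OF eb _ x] by (intro sum.cong) auto
    finally show ?thesis using fin x by (simp add: mult_if_one_zero)
  qed
  have "(\<Sum>y\<in>I. Q r y * \<rho> g y x) = (\<Sum>y\<in>I. Q r y * (\<Sum>s<d. (\<chi> s g * P y s) * Q s x))"
    unfolding expand using eigenbasis_eigen[OF eb g] by (intro sum.cong) auto
  also have "\<dots> = (\<Sum>s<d. \<chi> s g * (\<Sum>y\<in>I. Q r y * P y s) * Q s x)"
    by (simp add: sum_distrib_left sum_distrib_right mult_ac sum.swap[of _ I])
  also have "\<dots> = (\<Sum>s<d. if s = r then \<chi> s g * Q s x else 0)"
    using eigenbasis_QP[OF eb r] by (intro sum.cong) auto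
  finally show ?thesis using r by simp
qed

lemma eigenbasis_character:
  fixes \<rho> :: "'g \<Rightarrow> 'b \<Rightarrow> 'b \<Rightarrow> 'k::field"
  assumes grp: "group G" and rep: "is_rep G I \<rho>" and eb: "eigenbasis G I \<rho> d P Q \<chi>" and r: "r < d"
  shows "\<chi> r \<one>\<^bsub>G\<^esub> = 1"
    and "\<And>g h. g \<in> carrier G \<Longrightarrow> h \<in> carrier G \<Longrightarrow> \<chi> r (g \<otimes>\<^bsub>G\<^esub> h) = \<chi> r g * \<chi> r h"
proof -
  interpret group G by (rule grp)
  have fin: "finite I" using rep by (rule is_rep_finite)
  obtain x where x: "x \<in> I" and nz: "P x r \<noteq> 0"
    using eigenbasis_QP[OF eb r r] by (metis (no_types, lifting) mult_zero_right sum.neutral zero_neq_one)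
  have "(\<Sum>y\<in>I. \<rho> \<one>\<^bsub>G\<^esub> x y * P y r) = P x r"
    using is_rep_one[OF rep x] fin x by (simp add: if_one_zero_mult)
  then show "\<chi> r \<one>\<^bsub>G\<^esub> = 1"
    using eigenbasis_eigen[OF eb one_closed x r] nz by simp
  fix g h assume g: "g \<in> carrier G" and h: "h \<in> carrier G"
  have "\<chi> r (g \<otimes>\<^bsub>G\<^esub> h) * P x r = (\<Sum>y\<in>I. \<rho> (g \<otimes>\<^bsub>G\<^esub> h) x y * P y r)"
    using eigenbasis_eigen[OF eb _ x r] g h by simp
  also have "\<dots> = (\<Sum>y\<in>I. (\<Sum>c\<in>I. \<rho> g x c * \<rho> h c y) * P y r)"
    using is_rep_mult[OF rep g h x] by (intro sum.cong) auto
  also have "\<dots> = (\<Sum>c\<in>I. \<rho> g x c * (\<Sum>y\<in>I. \<rho> h c y * P y r))"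
    unfolding sum_distrib_left sum_distrib_right mult.assoc by (rule sum.swap)
  also have "\<dots> = \<chi> r h * (\<Sum>c\<in>I. \<rho> g x c * P c r)"
    using eigenbasis_eigen[OF eb h _ r] by (simp add: sum_distrib_left mult_ac)
  also have "\<dots> = \<chi> r h * (\<chi> r g * P x r)" using eigenbasis_eigen[OF eb g x r] by simp
  finally show "\<chi> r (g \<otimes>\<^bsub>G\<^esub> h) = \<chi> r g * \<chi> r h" using nz by (simp add: mult_ac)
qed

lemma (in group) sum_translate_left:
  assumes "a \<in> carrier G"
  shows "(\<Sum>x\<in>carrier G. f (a \<otimes> x)) = (\<Sum>x\<in>carrier G. f x)"
proof -
  have "bij_betw (\<lambda>x. a \<otimes> x) (carrier G) (carrier G)"
    unfolding bij_betw_def using assms inj_on_cmult surj_const_mult by blast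
  then show ?thesis by (rule sum.reindex_bij_betw)
qed

lemma character_orthogonality:
  fixes a b :: "'g \<Rightarrow> 'k::field"
  assumes cg: "comm_group G" and fin: "finite (carrier G)"
    and a1: "a \<one>\<^bsub>G\<^esub> = 1" and am: "\<And>g h. g \<in> carrier G \<Longrightarrow> h \<in> carrier G \<Longrightarrow> a (g \<otimes>\<^bsub>G\<^esub> h) = a g * a h"
    and b1: "b \<one>\<^bsub>G\<^esub> = 1" and bm: "\<And>g h. g \<in> carrier G \<Longrightarrow> h \<in> carrier G \<Longrightarrow> b (g \<otimes>\<^bsub>G\<^esub> h) = b g * b h"
  shows "(\<Sum>g\<in>carrier G. a g * b (inv\<^bsub>G\<^esub> g)) =
    (if \<forall>g\<in>carrier G. a g = b g then of_nat (card (carrier G)) else 0)"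
proof -
  interpret comm_group G by fact
  have binv: "b (inv\<^bsub>G\<^esub> g) * b g = 1" if "g \<in> carrier G" for g
    using bm[of "inv\<^bsub>G\<^esub> g" g] b1 that by simp
  show ?thesis
  proof (cases "\<forall>g\<in>carrier G. a g = b g")
    case True
    then have "(\<Sum>g\<in>carrier G. a g * b (inv\<^bsub>G\<^esub> g)) = (\<Sum>g\<in>carrier G. 1)"
      using binv by (intro sum.cong) (auto simp: mult.commute)
    then show ?thesis using True by simp
  next
    case False
    then obtain h where h: "h \<in> carrier G" and ne: "a h \<noteq> b h" by blast
    define f where "f g = a g * b (inv\<^bsub>G\<^esub> g)" for g
    have fh: "f h \<noteq> 1"
    proof
      assume "f h = 1"
      have "a h = a h * (b (inv\<^bsub>G\<^esub> h) * b h)" using binv h by simp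
      also have "\<dots> = f h * b h" unfolding f_def by (simp add: mult_ac)
      finally show False using \<open>f h = 1\<close> ne by simp
    qed
    have "(\<Sum>g\<in>carrier G. f g) = (\<Sum>g\<in>carrier G. f (h \<otimes>\<^bsub>G\<^esub> g))"
      using sum_translate_left[OF h, of f] by simp
    also have "\<dots> = f h * (\<Sum>g\<in>carrier G. f g)"
      unfolding f_def sum_distrib_left using h am bm by (intro sum.cong) (simp_all add: inv_mult mult_ac)
    finally have "(1 - f h) * (\<Sum>g\<in>carrier G. f g) = 0" by (simp add: algebra_simps)
    then have "(\<Sum>g\<in>carrier G. f g) = 0" using fh by simp
    then show ?thesis using False unfolding f_def by (simp only: if_False)
  qed
qed

definition left_regular_rep :: "('g,'c) monoid_scheme \<Rightarrow> 'g \<Rightarrow> 'g \<Rightarrow> 'g \<Rightarrow> 'k::field" where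
  "left_regular_rep G g x y = (if x = g \<otimes>\<^bsub>G\<^esub> y then 1 else 0)"

lemma is_rep_left_regular:
  assumes "group G" "finite (carrier G)"
  shows "is_rep G (carrier G) (left_regular_rep G)"
proof -
  interpret group G by fact
  have mult: "left_regular_rep G (g \<otimes>\<^bsub>G\<^esub> h) a b =
      (\<Sum>c\<in>carrier G. left_regular_rep G g a c * left_regular_rep G h c b)"
    if "g \<in> carrier G" "h \<in> carrier G" "b \<in> carrier G" for g h a b
  proof -
    have "(\<Sum>c\<in>carrier G. left_regular_rep G g a c * left_regular_rep G h c b) =
        (\<Sum>c\<in>carrier G. if c = h \<otimes>\<^bsub>G\<^esub> b then left_regular_rep G g a c else 0)"
      unfolding left_regular_rep_def by (intro sum.cong) auto
    also have "\<dots> = left_regular_rep G g a (h \<otimes>\<^bsub>G\<^esub> b)" using that assms(2) by simp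
    also have "\<dots> = left_regular_rep G (g \<otimes>\<^bsub>G\<^esub> h) a b"
      unfolding left_regular_rep_def using that by (simp add: m_assoc)
    finally show ?thesis by (rule sym)
  qed
  show ?thesis
    unfolding is_rep_def
  proof (intro conjI ballI)
    fix a b assume "a \<in> carrier G" "b \<in> carrier G"
    then show "left_regular_rep G \<one>\<^bsub>G\<^esub> a b = (if a = b then 1 else 0)"
      by (simp add: left_regular_rep_def)
  qed (simp_all add: assms(2) mult)
qed

text \<open>If \<open>|G| = 0\<close> in \<open>K\<close>, every eigenvector of the left regular representation has coordinate
  sum zero (a nonzero sum forces a trivial character, hence a constant vector), yet the eigenvectors
  span the point mass at \<open>\<one>\<^bsub>G\<^esub>\<close>.\<close>

lemma card_carrier_neq_zero:
  fixes G :: "('g,'c) monoid_scheme"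
  assumes grp: "group G" and fin: "finite (carrier G)"
    and K_split: "\<forall>d (\<sigma> :: 'g \<Rightarrow> nat \<Rightarrow> nat \<Rightarrow> 'k::field). is_rep G {..<d} \<sigma> \<longrightarrow> splits_into_lines G d \<sigma>"
  shows "of_nat (card (carrier G)) \<noteq> (0::'k)"
proof
  interpret group G by fact
  obtain d P Q \<chi> where eb: "eigenbasis G (carrier G) (left_regular_rep G :: 'g \<Rightarrow> 'g \<Rightarrow> 'g \<Rightarrow> 'k) d P Q \<chi>"
    using eigenbasis_exists[OF K_split is_rep_left_regular[OF grp fin]] by blast
  assume N0: "of_nat (card (carrier G)) = (0::'k)"
  have shift: "P (inv\<^bsub>G\<^esub> g \<otimes>\<^bsub>G\<^esub> x) r = \<chi> r g * P x r" if g: "g \<in> carrier G" and x: "x \<in> carrier G" and r: "r < d" for g x r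
  proof -
    have "(\<Sum>y\<in>carrier G. left_regular_rep G g x y * P y r) = (\<Sum>y\<in>carrier G. if y = inv\<^bsub>G\<^esub> g \<otimes>\<^bsub>G\<^esub> x then P y r else 0)"
      unfolding left_regular_rep_def using g x by (intro sum.cong) (auto simp: inv_solve_left)
    then show ?thesis using eigenbasis_eigen[OF eb g x r] g x fin by simp
  qed
  have coord_sum: "(\<Sum>x\<in>carrier G. P x r) = 0" if r: "r < d" for r
  proof (rule ccontr)
    assume nz: "(\<Sum>x\<in>carrier G. P x r) \<noteq> 0"
    have trivial: "\<chi> r g = 1" if g: "g \<in> carrier G" for g
    proof -
      have "(\<Sum>x\<in>carrier G. P x r) = (\<Sum>x\<in>carrier G. P (inv\<^bsub>G\<^esub> g \<otimes>\<^bsub>G\<^esub> x) r)"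
        using sum_translate_left[of "inv\<^bsub>G\<^esub> g" "\<lambda>x. P x r"] g by simp
      also have "\<dots> = \<chi> r g * (\<Sum>x\<in>carrier G. P x r)"
        using shift g r by (simp add: sum_distrib_left)
      finally show ?thesis using nz by simp
    qed
    have "P x r = P \<one>\<^bsub>G\<^esub> r" if "x \<in> carrier G" for x
      using shift[OF that that r] trivial[OF that] that by simp
    then have "(\<Sum>x\<in>carrier G. P x r) = (\<Sum>x\<in>carrier G. P \<one>\<^bsub>G\<^esub> r)"
      by (rule sum.cong[OF refl])
    then have "(\<Sum>x\<in>carrier G. P x r) = of_nat (card (carrier G)) * P \<one>\<^bsub>G\<^esub> r" by simp
    then show False using nz N0 by simp
  qed
  have "(1::'k) = (\<Sum>x\<in>carrier G. if x = \<one>\<^bsub>G\<^esub> then 1 else 0)" using fin by simp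
  also have "\<dots> = (\<Sum>x\<in>carrier G. \<Sum>r<d. P x r * Q r \<one>\<^bsub>G\<^esub>)"
    using eigenbasis_PQ[OF eb] by (intro sum.cong) auto
  also have "\<dots> = (\<Sum>r<d. (\<Sum>x\<in>carrier G. P x r) * Q r \<one>\<^bsub>G\<^esub>)"
    by (subst sum.swap) (simp add: sum_distrib_right)
  also have "\<dots> = 0" using coord_sum by simp
  finally show False by simp
qed

section \<open>Maps to and from the regular representation\<close>

text \<open>Frobenius reciprocity in coordinates: \<open>to_regular \<alpha>\<close> is the \<open>G\<close>-map \<open>V \<rightarrow> K[G]^n\<close>,
  \<open>v \<mapsto> \<Sum>\<^sub>g\<^sub>,\<^sub>s \<alpha>\<^sub>s(g\<inverse> v) e\<^sub>(\<^sub>g\<^sub>,\<^sub>s\<^sub>)\<close>, determined by the functionals \<open>\<alpha>\<^sub>s\<close>, and \<open>from_regular u\<close>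
  is the \<open>G\<close>-map \<open>K[G]^n \<rightarrow> V\<close>, \<open>e\<^sub>(\<^sub>g\<^sub>,\<^sub>s\<^sub>) \<mapsto> g u\<^sub>s\<close>, determined by the vectors \<open>u\<^sub>s\<close>.\<close>

definition to_regular :: "('g,'c) monoid_scheme \<Rightarrow> 'b set \<Rightarrow> ('g \<Rightarrow> 'b \<Rightarrow> 'b \<Rightarrow> 'k::field) \<Rightarrow> (nat \<Rightarrow> 'b \<Rightarrow> 'k)
    \<Rightarrow> ('g \<times> nat) \<Rightarrow> 'b \<Rightarrow> 'k" where
  "to_regular G I \<rho> \<alpha> = (\<lambda>(g,s) y. \<Sum>x\<in>I. \<alpha> s x * \<rho> (inv\<^bsub>G\<^esub> g) x y)"

definition from_regular :: "('g,'c) monoid_scheme \<Rightarrow> 'b set \<Rightarrow> ('g \<Rightarrow> 'b \<Rightarrow> 'b \<Rightarrow> 'k::field) \<Rightarrow> (nat \<Rightarrow> 'b \<Rightarrow> 'k)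
    \<Rightarrow> 'b \<Rightarrow> ('g \<times> nat) \<Rightarrow> 'k" where
  "from_regular G I \<rho> u = (\<lambda>x (g,s). \<Sum>z\<in>I. \<rho> g x z * u s z)"

lemma finite_reg_idx: "finite (carrier G) \<Longrightarrow> finite (reg_idx G n)"
  unfolding reg_idx_def by simp

lemma sum_reg_rep_left:
  assumes grp: "group G" and fin: "finite (carrier G)" and h: "h \<in> carrier G" and g: "g \<in> carrier G" and s: "s < n"
  shows "(\<Sum>c\<in>reg_idx G n. reg_rep G h (g,s) c * F c) = F (inv\<^bsub>G\<^esub> h \<otimes>\<^bsub>G\<^esub> g, s)"
proof -
  interpret group G by fact
  have "(\<Sum>c\<in>reg_idx G n. reg_rep G h (g,s) c * F c) =
      (\<Sum>c\<in>reg_idx G n. if c = (inv\<^bsub>G\<^esub> h \<otimes>\<^bsub>G\<^esub> g, s) then F c else 0)"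
  proof (intro sum.cong refl)
    fix c assume c: "c \<in> reg_idx G n"
    have "(g = h \<otimes>\<^bsub>G\<^esub> fst c \<and> s = snd c) \<longleftrightarrow> c = (inv\<^bsub>G\<^esub> h \<otimes>\<^bsub>G\<^esub> g, s)"
      using c h g unfolding reg_idx_def by (cases c) (auto simp: inv_solve_left)
    then show "reg_rep G h (g,s) c * F c = (if c = (inv\<^bsub>G\<^esub> h \<otimes>\<^bsub>G\<^esub> g, s) then F c else 0)"
      unfolding reg_rep_def by auto
  qed
  then show ?thesis using fin h g s unfolding reg_idx_def by simp
qed

lemma sum_reg_rep_right:
  assumes grp: "group G" and fin: "finite (carrier G)" and h: "h \<in> carrier G" and g: "g \<in> carrier G" and s: "s < n"
  shows "(\<Sum>c\<in>reg_idx G n. F c * reg_rep G h c (g,s)) = F (h \<otimes>\<^bsub>G\<^esub> g, s)"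
proof -
  interpret group G by fact
  have "(\<Sum>c\<in>reg_idx G n. F c * reg_rep G h c (g,s)) = (\<Sum>c\<in>reg_idx G n. if c = (h \<otimes>\<^bsub>G\<^esub> g, s) then F c else 0)"
    unfolding reg_rep_def by (intro sum.cong refl) (auto simp: prod_eq_iff)
  then show ?thesis using fin h g s unfolding reg_idx_def by simp
qed

lemma glin_to_regular:
  fixes \<rho> :: "'g \<Rightarrow> 'b \<Rightarrow> 'b \<Rightarrow> 'k::field"
  assumes grp: "group G" and fin: "finite (carrier G)" and rep: "is_rep G I \<rho>"
  shows "glin G I \<rho> (reg_idx G n) (reg_rep G) (to_regular G I \<rho> \<alpha>)"
  unfolding glin_def
proof (intro ballI)
  interpret group G by fact
  fix h b a assume h: "h \<in> carrier G" and b: "b \<in> reg_idx G n" and a: "a \<in> I"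
  obtain g s where bgs: "b = (g,s)" and g: "g \<in> carrier G" and s: "s < n"
    using b unfolding reg_idx_def by auto
  have "(\<Sum>c\<in>reg_idx G n. reg_rep G h b c * to_regular G I \<rho> \<alpha> c a) =
      to_regular G I \<rho> \<alpha> (inv\<^bsub>G\<^esub> h \<otimes>\<^bsub>G\<^esub> g, s) a"
    unfolding bgs by (rule sum_reg_rep_left[OF grp fin h g s])
  also have "\<dots> = (\<Sum>x\<in>I. \<alpha> s x * \<rho> (inv\<^bsub>G\<^esub> g \<otimes>\<^bsub>G\<^esub> h) x a)"
    unfolding to_regular_def using g h by (simp add: inv_mult_group)
  also have "\<dots> = (\<Sum>x\<in>I. \<alpha> s x * (\<Sum>c\<in>I. \<rho> (inv\<^bsub>G\<^esub> g) x c * \<rho> h c a))"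
    using is_rep_mult[OF rep _ h _ a] g by (intro sum.cong) auto
  also have "\<dots> = (\<Sum>c\<in>I. to_regular G I \<rho> \<alpha> b c * \<rho> h c a)"
    unfolding to_regular_def bgs case_prod_conv sum_distrib_left sum_distrib_right mult.assoc by (rule sum.swap)
  finally show "(\<Sum>c\<in>reg_idx G n. reg_rep G h b c * to_regular G I \<rho> \<alpha> c a) =
      (\<Sum>c\<in>I. to_regular G I \<rho> \<alpha> b c * \<rho> h c a)" .
qed

lemma glin_from_regular:
  fixes \<rho> :: "'g \<Rightarrow> 'b \<Rightarrow> 'b \<Rightarrow> 'k::field"
  assumes grp: "group G" and fin: "finite (carrier G)" and rep: "is_rep G I \<rho>"
  shows "glin G (reg_idx G n) (reg_rep G) I \<rho> (from_regular G I \<rho> u)"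
  unfolding glin_def
proof (intro ballI)
  interpret group G by fact
  fix h b a assume h: "h \<in> carrier G" and b: "b \<in> I" and a: "a \<in> reg_idx G n"
  obtain g s where ags: "a = (g,s)" and g: "g \<in> carrier G" and s: "s < n"
    using a unfolding reg_idx_def by auto
  have "(\<Sum>c\<in>I. \<rho> h b c * from_regular G I \<rho> u c a) = (\<Sum>z\<in>I. (\<Sum>c\<in>I. \<rho> h b c * \<rho> g c z) * u s z)"
    unfolding from_regular_def ags case_prod_conv sum_distrib_left sum_distrib_right mult.assoc by (rule sum.swap)
  also have "\<dots> = (\<Sum>z\<in>I. \<rho> (h \<otimes>\<^bsub>G\<^esub> g) b z * u s z)"
    using is_rep_mult[OF rep h g b] by (intro sum.cong) auto
  also have "\<dots> = (\<Sum>c\<in>reg_idx G n. from_regular G I \<rho> u b c * reg_rep G h c a)"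
    unfolding ags sum_reg_rep_right[OF grp fin h g s] from_regular_def by simp
  finally show "(\<Sum>c\<in>I. \<rho> h b c * from_regular G I \<rho> u c a) =
      (\<Sum>c\<in>reg_idx G n. from_regular G I \<rho> u b c * reg_rep G h c a)" .
qed

lemma to_regular_one:
  fixes \<rho> :: "'g \<Rightarrow> 'b \<Rightarrow> 'b \<Rightarrow> 'k::field"
  assumes grp: "group G" and rep: "is_rep G I \<rho>" and y: "y \<in> I"
  shows "to_regular G I \<rho> \<alpha> (\<one>\<^bsub>G\<^esub>, s) y = \<alpha> s y"
proof -
  interpret group G by fact
  have "to_regular G I \<rho> \<alpha> (\<one>\<^bsub>G\<^esub>, s) y = (\<Sum>x\<in>I. \<alpha> s x * (if x = y then 1 else 0))"
    unfolding to_regular_def using is_rep_one[OF rep _ y] by (auto intro: sum.cong)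
  then show ?thesis using is_rep_finite[OF rep] y by (simp add: mult_if_one_zero)
qed

lemma sum_swap_pairs:
  "(\<Sum>a\<in>A. \<Sum>b\<in>B. \<Sum>c\<in>C. \<Sum>d\<in>D. F a b c d) = (\<Sum>c\<in>C. \<Sum>d\<in>D. \<Sum>a\<in>A. \<Sum>b\<in>B. F a b c d)"
proof -
  have "(\<Sum>a\<in>A. \<Sum>b\<in>B. \<Sum>c\<in>C. \<Sum>d\<in>D. F a b c d) = (\<Sum>a\<in>A. \<Sum>c\<in>C. \<Sum>d\<in>D. \<Sum>b\<in>B. F a b c d)"
    by (intro sum.cong refl) (subst sum.swap, intro sum.cong refl sum.swap)
  also have "\<dots> = (\<Sum>c\<in>C. \<Sum>d\<in>D. \<Sum>a\<in>A. \<Sum>b\<in>B. F a b c d)"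
    by (subst sum.swap) (intro sum.cong refl sum.swap)
  finally show ?thesis .
qed

lemma from_regular_to_regular_eigen:
  fixes \<rho> :: "'g \<Rightarrow> 'b \<Rightarrow> 'b \<Rightarrow> 'k::field"
  assumes grp: "group G" and fin: "finite (carrier G)" and rep: "is_rep G I \<rho>"
    and eb: "eigenbasis G I \<rho> d P Q \<chi>" and x: "x \<in> I" and y: "y \<in> I"
  shows "(\<Sum>c\<in>reg_idx G n. from_regular G I \<rho> (\<lambda>s z. \<Sum>t<d. P z t * \<beta> t s) x c
                          * to_regular G I \<rho> (\<lambda>s x. \<Sum>r<d. \<gamma> s r * Q r x) c y)
    = (\<Sum>t<d. \<Sum>r<d. P x t * (\<Sum>g\<in>carrier G. \<chi> t g * \<chi> r (inv\<^bsub>G\<^esub> g)) * (\<Sum>s<n. \<beta> t s * \<gamma> s r) * Q r y)"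
proof -
  interpret group G by fact
  have from_eigen: "from_regular G I \<rho> (\<lambda>s z. \<Sum>t<d. P z t * \<beta> t s) x (g,s) = (\<Sum>t<d. \<chi> t g * P x t * \<beta> t s)"
    if g: "g \<in> carrier G" for g s
  proof -
    have "from_regular G I \<rho> (\<lambda>s z. \<Sum>t<d. P z t * \<beta> t s) x (g,s) = (\<Sum>t<d. (\<Sum>z\<in>I. \<rho> g x z * P z t) * \<beta> t s)"
      unfolding from_regular_def case_prod_conv sum_distrib_left sum_distrib_right mult.assoc
      by (rule sum.swap)
    then show ?thesis using eigenbasis_eigen[OF eb g x] by simp
  qed
  have to_eigen: "to_regular G I \<rho> (\<lambda>s x. \<Sum>r<d. \<gamma> s r * Q r x) (g,s) y = (\<Sum>r<d. \<gamma> s r * \<chi> r (inv\<^bsub>G\<^esub> g) * Q r y)"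
    if g: "g \<in> carrier G" for g s
  proof -
    have "to_regular G I \<rho> (\<lambda>s x. \<Sum>r<d. \<gamma> s r * Q r x) (g,s) y = (\<Sum>r<d. \<gamma> s r * (\<Sum>x'\<in>I. Q r x' * \<rho> (inv\<^bsub>G\<^esub> g) x' y))"
      unfolding to_regular_def case_prod_conv sum_distrib_left sum_distrib_right mult.assoc
      by (rule sum.swap)
    then show ?thesis using eigenbasis_left_eigen[OF rep eb _ _ y] g by (simp add: mult.assoc)
  qed
  let ?T = "\<lambda>g s t r. (P x t * Q r y) * ((\<chi> t g * \<chi> r (inv\<^bsub>G\<^esub> g)) * (\<beta> t s * \<gamma> s r))"
  have "(\<Sum>c\<in>reg_idx G n. from_regular G I \<rho> (\<lambda>s z. \<Sum>t<d. P z t * \<beta> t s) x c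
                          * to_regular G I \<rho> (\<lambda>s x. \<Sum>r<d. \<gamma> s r * Q r x) c y)
    = (\<Sum>g\<in>carrier G. \<Sum>s<n. (\<Sum>t<d. \<chi> t g * P x t * \<beta> t s) * (\<Sum>r<d. \<gamma> s r * \<chi> r (inv\<^bsub>G\<^esub> g) * Q r y))"
    unfolding reg_idx_def sum.cartesian_product using from_eigen to_eigen by (intro sum.cong) auto
  also have "\<dots> = (\<Sum>g\<in>carrier G. \<Sum>s<n. \<Sum>t<d. \<Sum>r<d. ?T g s t r)"
    unfolding sum_product by (intro sum.cong refl) (simp add: mult_ac)
  also have "\<dots> = (\<Sum>t<d. \<Sum>r<d. \<Sum>g\<in>carrier G. \<Sum>s<n. ?T g s t r)"
    by (rule sum_swap_pairs)
  also have "\<dots> = (\<Sum>t<d. \<Sum>r<d. P x t * (\<Sum>g\<in>carrier G. \<chi> t g * \<chi> r (inv\<^bsub>G\<^esub> g)) * (\<Sum>s<n. \<beta> t s * \<gamma> s r) * Q r y)"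
  proof (intro sum.cong refl)
    fix t r
    have "P x t * (\<Sum>g\<in>carrier G. \<chi> t g * \<chi> r (inv\<^bsub>G\<^esub> g)) * (\<Sum>s<n. \<beta> t s * \<gamma> s r) * Q r y
        = (P x t * Q r y) * ((\<Sum>g\<in>carrier G. \<chi> t g * \<chi> r (inv\<^bsub>G\<^esub> g)) * (\<Sum>s<n. \<beta> t s * \<gamma> s r))"
      by (simp only: mult_ac)
    also have "\<dots> = (P x t * Q r y) *
        (\<Sum>g\<in>carrier G. \<Sum>s<n. (\<chi> t g * \<chi> r (inv\<^bsub>G\<^esub> g)) * (\<beta> t s * \<gamma> s r))"
      by (simp only: sum_product)
    also have "\<dots> = (\<Sum>g\<in>carrier G. \<Sum>s<n. ?T g s t r)"
      by (simp only: sum_distrib_left)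
    finally show "(\<Sum>g\<in>carrier G. \<Sum>s<n. ?T g s t r) = P x t * (\<Sum>g\<in>carrier G. \<chi> t g * \<chi> r (inv\<^bsub>G\<^esub> g))
        * (\<Sum>s<n. \<beta> t s * \<gamma> s r) * Q r y" by (rule sym)
  qed
  finally show ?thesis .
qed

section \<open>Isotypic flattenings\<close>

text \<open>Row \<open>r\<close> of the flattening of \<open>\<omega>\<close> at slot \<open>l\<close>, in the coordinates \<open>Q\<close> of \<open>V\<^sub>l\<close>, against the
  multi-index \<open>j\<close> of the other slots (the \<open>l\<close>-th entry of \<open>j\<close> is ignored).\<close>

definition flattening :: "(nat \<Rightarrow> 'b set) \<Rightarrow> (nat \<Rightarrow> 'b \<Rightarrow> 'k) \<Rightarrow> nat \<Rightarrow> ((nat \<Rightarrow> 'b) \<Rightarrow> 'k::field)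
    \<Rightarrow> nat \<Rightarrow> (nat \<Rightarrow> 'b) \<Rightarrow> 'k" where
  "flattening I Q l \<omega> r j = (\<Sum>y\<in>I l. Q r y * \<omega> (j(l:=y)))"

definition char_class :: "('g,'c) monoid_scheme \<Rightarrow> nat \<Rightarrow> (nat \<Rightarrow> 'g \<Rightarrow> 'k) \<Rightarrow> nat \<Rightarrow> nat set" where
  "char_class G d \<chi> t = {r. r < d \<and> (\<forall>g\<in>carrier G. \<chi> r g = \<chi> t g)}"

lemma char_class_self: "t < d \<Longrightarrow> t \<in> char_class G d \<chi> t"
  and char_class_eq: "r \<in> char_class G d \<chi> t \<Longrightarrow> char_class G d \<chi> r = char_class G d \<chi> t"
  and char_class_subset: "char_class G d \<chi> t \<subseteq> {..<d}"
  unfolding char_class_def by auto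

lemma row_rank_le_blockwise:
  fixes F :: "'r \<Rightarrow> 'c \<Rightarrow> 'k::field"
  assumes self: "\<And>t. t \<in> T \<Longrightarrow> t \<in> B t" and block_eq: "\<And>t r. r \<in> B t \<Longrightarrow> B r = B t"
    and ranks: "\<forall>t\<in>T. row_rank_le n (B t) C F"
  shows "\<exists>A \<Gamma>. \<forall>t\<in>T. \<forall>j\<in>C. F t j = (\<Sum>r\<in>B t. (\<Sum>s<n. A t s * \<Gamma> s r) * F r j)"
proof -
  have choice: "\<forall>S\<in>B ` T. \<exists>AG. \<forall>r\<in>S. \<forall>j\<in>C. F r j = (\<Sum>s<n. fst AG r s * (\<Sum>r'\<in>S. snd AG s r' * F r' j))"
    using ranks unfolding row_rank_le_def by fastforce
  obtain f where f: "\<forall>S\<in>B ` T. \<forall>r\<in>S. \<forall>j\<in>C.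
      F r j = (\<Sum>s<n. fst (f S) r s * (\<Sum>r'\<in>S. snd (f S) s r' * F r' j))"
    using bchoice[OF choice] by (rule exE)
  define A where "A t s = fst (f (B t)) t s" for t s
  define \<Gamma> where "\<Gamma> s r = snd (f (B r)) s r" for s r
  have "F t j = (\<Sum>r\<in>B t. (\<Sum>s<n. A t s * \<Gamma> s r) * F r j)" if t: "t \<in> T" and j: "j \<in> C" for t j
  proof -
    have \<Gamma>_sum: "(\<Sum>r\<in>B t. snd (f (B t)) s r * F r j) = (\<Sum>r\<in>B t. \<Gamma> s r * F r j)" for s
      unfolding \<Gamma>_def using block_eq by (intro sum.cong) auto
    have "F t j = (\<Sum>s<n. fst (f (B t)) t s * (\<Sum>r\<in>B t. snd (f (B t)) s r * F r j))"
      by (rule f[rule_format, OF imageI[OF t] self[OF t] j])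
    also have "\<dots> = (\<Sum>s<n. A t s * (\<Sum>r\<in>B t. \<Gamma> s r * F r j))"
      unfolding A_def \<Gamma>_sum ..
    finally show ?thesis
      by (simp add: sum_distrib_left sum_distrib_right mult.assoc sum.swap[of _ "B t"])
  qed
  then show ?thesis by blast
qed

text \<open>The composite \<open>from_regular u \<circ> to_regular \<alpha>\<close> is, in the eigenbasis, block diagonal with respect
  to the character classes, the blocks being \<open>|G|\<close> times an arbitrary product of an \<open>(\<cdot> \<times> n)\<close> and an
  \<open>(n \<times> \<cdot>)\<close> matrix; so it can reproduce the flattening exactly when each isotypic block has rank
  at most \<open>n\<close>.\<close>

lemma slot_factors_through_regular:
  fixes \<rho> :: "'g \<Rightarrow> 'b \<Rightarrow> 'b \<Rightarrow> 'k::field" and \<omega> :: "(nat \<Rightarrow> 'b) \<Rightarrow> 'k"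
  assumes cg: "comm_group G" and fin: "finite (carrier G)" and N: "of_nat (card (carrier G)) \<noteq> (0::'k)"
    and finI: "\<forall>i<m. finite (I i)" and l: "l < m" and w: "\<omega> \<in> tensor_space m I"
    and rep: "is_rep G (I l) \<rho>" and eb: "eigenbasis G (I l) \<rho> d P Q \<chi>"
    and ranks: "\<forall>t<d. row_rank_le n (char_class G d \<chi> t) (tidx m I) (flattening I Q l \<omega>)"
  shows "\<exists>\<alpha> u. tensor_map m I I (\<lambda>i. if i = l
      then (\<lambda>b a. \<Sum>c\<in>reg_idx G n. from_regular G (I l) \<rho> u b c * to_regular G (I l) \<rho> \<alpha> c a)
      else id_matrix) \<omega> = \<omega>"
proof -
  interpret comm_group G by fact
  let ?cl = "char_class G d \<chi>"
  let ?fl = "flattening I Q l \<omega>"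
  define N' where "N' = (of_nat (card (carrier G)) :: 'k)"
  obtain A \<Gamma> where A\<Gamma>: "\<forall>t\<in>{..<d}. \<forall>j\<in>tidx m I. ?fl t j = (\<Sum>r\<in>?cl t. (\<Sum>s<n. A t s * \<Gamma> s r) * ?fl r j)"
    using row_rank_le_blockwise[of "{..<d}" ?cl n "tidx m I" ?fl] char_class_self char_class_eq ranks
    by blast
  define \<beta> where "\<beta> t s = A t s / N'" for t s
  define \<alpha> where "\<alpha> = (\<lambda>s x. \<Sum>r<d. \<Gamma> s r * Q r x)"
  define u where "u = (\<lambda>s z. \<Sum>t<d. P z t * \<beta> t s)"
  define Om where "Om t r = (\<Sum>g\<in>carrier G. \<chi> t g * \<chi> r (inv\<^bsub>G\<^esub> g))" for t r
  define Bc where "Bc t r = (\<Sum>s<n. \<beta> t s * \<Gamma> s r)" for t r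
  have Om_eq: "Om t r = (if r \<in> ?cl t then N' else 0)" if t: "t < d" and r: "r < d" for t r
  proof -
    have "Om t r = (if \<forall>g\<in>carrier G. \<chi> t g = \<chi> r g then N' else 0)"
      unfolding Om_def N'_def
      by (rule character_orthogonality[OF cg fin eigenbasis_character[OF is_group rep eb t]
            eigenbasis_character[OF is_group rep eb r]])
    then show ?thesis using r unfolding char_class_def by auto
  qed
  have block: "(\<Sum>r<d. Om t r * Bc t r * ?fl r j) = ?fl t j" if t: "t < d" and j: "j \<in> tidx m I" for t j
  proof -
    have "(\<Sum>r<d. Om t r * Bc t r * ?fl r j) = (\<Sum>r<d. if r \<in> ?cl t then N' * Bc t r * ?fl r j else 0)"
      using Om_eq[OF t] by (intro sum.cong) auto
    also have "\<dots> = (\<Sum>r\<in>?cl t. N' * Bc t r * ?fl r j)"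
      by (rule sum_if_subset[OF _ char_class_subset]) simp
    also have "\<dots> = (\<Sum>r\<in>?cl t. (\<Sum>s<n. A t s * \<Gamma> s r) * ?fl r j)"
    proof (intro sum.cong refl)
      fix r
      have "N' * Bc t r = (\<Sum>s<n. A t s * \<Gamma> s r)"
        unfolding Bc_def \<beta>_def sum_distrib_left using N unfolding N'_def by (intro sum.cong) auto
      then show "N' * Bc t r * ?fl r j = (\<Sum>s<n. A t s * \<Gamma> s r) * ?fl r j" by simp
    qed
    also have "\<dots> = ?fl t j" using A\<Gamma> t j by simp
    finally show ?thesis .
  qed
  have slot: "(\<Sum>y\<in>I l. (\<Sum>c\<in>reg_idx G n. from_regular G (I l) \<rho> u x c * to_regular G (I l) \<rho> \<alpha> c y)
        * \<omega> (j(l:=y))) = \<omega> (j(l:=x))" if x: "x \<in> I l" and j: "j \<in> tidx m I" for x j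
  proof -
    have "(\<Sum>y\<in>I l. (\<Sum>c\<in>reg_idx G n. from_regular G (I l) \<rho> u x c * to_regular G (I l) \<rho> \<alpha> c y)
          * \<omega> (j(l:=y)))
       = (\<Sum>y\<in>I l. (\<Sum>t<d. \<Sum>r<d. P x t * Om t r * Bc t r * Q r y) * \<omega> (j(l:=y)))"
      unfolding u_def \<alpha>_def Om_def Bc_def
      using from_regular_to_regular_eigen[OF is_group fin rep eb x] by (intro sum.cong) auto
    also have "\<dots> = (\<Sum>y\<in>I l. \<Sum>t<d. \<Sum>r<d. P x t * (Om t r * Bc t r * (Q r y * \<omega> (j(l:=y)))))"
      unfolding sum_distrib_right by (simp add: mult_ac)
    also have "\<dots> = (\<Sum>t<d. \<Sum>r<d. \<Sum>y\<in>I l. P x t * (Om t r * Bc t r * (Q r y * \<omega> (j(l:=y)))))"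
      by (subst sum.swap) (rule sum.cong[OF refl], rule sum.swap)
    also have "\<dots> = (\<Sum>t<d. P x t * (\<Sum>r<d. Om t r * Bc t r * ?fl r j))"
      unfolding flattening_def sum_distrib_left ..
    also have "\<dots> = (\<Sum>t<d. P x t * ?fl t j)"
      using block j by simp
    also have "\<dots> = (\<Sum>t<d. \<Sum>y\<in>I l. P x t * (Q t y * \<omega> (j(l:=y))))"
      unfolding flattening_def sum_distrib_left ..
    also have "\<dots> = (\<Sum>y\<in>I l. (\<Sum>t<d. P x t * Q t y) * \<omega> (j(l:=y)))"
      unfolding sum_distrib_right mult.assoc by (rule sum.swap)
    also have "\<dots> = (\<Sum>y\<in>I l. (if x = y then 1 else 0) * \<omega> (j(l:=y)))"
      using eigenbasis_PQ[OF eb x] by (intro sum.cong) auto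
    finally show ?thesis using x is_rep_finite[OF rep] by (simp add: if_one_zero_mult)
  qed
  have "tensor_map m I I (\<lambda>i. if i = l
      then (\<lambda>b a. \<Sum>c\<in>reg_idx G n. from_regular G (I l) \<rho> u b c * to_regular G (I l) \<rho> \<alpha> c a)
      else id_matrix) \<omega> x = \<omega> x" for x
  proof (cases "x \<in> tidx m I")
    case True
    then have xl: "x l \<in> I l" using l unfolding tidx_def by auto
    have "tensor_map m I I (\<lambda>i. if i = l
        then (\<lambda>b a. \<Sum>c\<in>reg_idx G n. from_regular G (I l) \<rho> u b c * to_regular G (I l) \<rho> \<alpha> c a)
        else id_matrix) \<omega> x = (\<Sum>y\<in>I l. (\<Sum>c\<in>reg_idx G n.
          from_regular G (I l) \<rho> u (x l) c * to_regular G (I l) \<rho> \<alpha> c y) * \<omega> (x(l:=y)))"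
      by (rule tensor_map_single_slot[OF finI l True])
    also have "\<dots> = \<omega> (x(l := x l))" by (rule slot[OF xl True])
    finally show ?thesis by simp
  next
    case False
    then show ?thesis using w unfolding tensor_map_def tensor_space_def by simp
  qed
  then show ?thesis by blast
qed

lemma flattening_minor_zero_if_border_rank_le:
  fixes \<tau> :: "(nat \<Rightarrow> 'j) \<Rightarrow> 'k::field"
  assumes l: "l < m" and br: "border_rank_le m J k \<tau>"
    and x: "\<forall>a<Suc k. x a \<in> J l" and y: "\<forall>b<Suc k. \<forall>i<m. i \<noteq> l \<longrightarrow> y b i \<in> J i"
  shows "det (mat (Suc k) (Suc k) (\<lambda>(a,b). \<tau> (\<lambda>i. if i < m then if i = l then x a else y b i else undefined))) = 0"
proof -
  define jj where "jj a b = (\<lambda>i. if i < m then if i = l then x a else y b i else undefined)" for a b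
  have jj: "jj a b \<in> tidx m J" if "a < Suc k" "b < Suc k" for a b
    using that x y unfolding jj_def tidx_def by (auto split: if_splits)
  define p where "p \<tau>' = det (mat (Suc k) (Suc k) (\<lambda>(a,b). \<tau>' (jj a b)))" for \<tau>' :: "(nat \<Rightarrow> 'j) \<Rightarrow> 'k"
  have "p \<in> poly_fun"
    unfolding p_def using poly_fun_det[of "Suc k" "\<lambda>a b \<tau>'. \<tau>' (jj a b)"] by (simp add: pf_var)
  moreover have "p \<tau>' = 0" if rank: "rank_le m J k \<tau>'" for \<tau>'
  proof -
    obtain v where v: "\<tau>' = (\<lambda>j. \<Sum>q<k. pure_tensor m J (v q) j)"
      using rank unfolding rank_le_def by blast
    have "\<tau>' (jj a b) = (\<Sum>q<k. v q l (x a) * (\<Prod>i\<in>{..<m}-{l}. v q i (y b i)))"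
      if "a < Suc k" "b < Suc k" for a b
    proof -
      have "(\<Prod>i<m. v q i (jj a b i)) = v q l (x a) * (\<Prod>i\<in>{..<m}-{l}. v q i (y b i))" for q
        using l by (subst prod.remove[of _ l]) (auto simp: jj_def intro!: prod.cong)
      then show ?thesis
        unfolding v pure_tensor_def using jj[OF that] by simp
    qed
    then have "p \<tau>' = det (mat (Suc k) (Suc k)
        (\<lambda>(a,b). \<Sum>q<k. v q l (x a) * (\<Prod>i\<in>{..<m}-{l}. v q i (y b i))))"
      unfolding p_def by (intro arg_cong[where f=det] eq_matI) auto
    then show ?thesis using det_rank_deficient by simp
  qed
  ultimately have "p \<tau> = 0"
    using br unfolding border_rank_le_def zariski_closure_def by blast
  then show ?thesis unfolding p_def jj_def .
qed

text \<open>A unit minor of an isotypic flattening at slot \<open>l\<close> is moved, by a suitable \<open>G\<close>-map, onto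
  the coordinates \<open>(\<one>\<^bsub>G\<^esub>, a)\<close> at slot \<open>l\<close> against \<open>(\<one>\<^bsub>G\<^esub>, b)\<close> at all other slots, where it is seen by a
  \<open>(k+1)\<times>(k+1)\<close> minor.\<close>

lemma regular_image_not_border_rank_le:
  fixes G :: "('g,'c) monoid_scheme" and I :: "nat \<Rightarrow> 'b set"
    and \<rho> :: "nat \<Rightarrow> 'g \<Rightarrow> 'b \<Rightarrow> 'b \<Rightarrow> 'k::field" and \<omega> :: "(nat \<Rightarrow> 'b) \<Rightarrow> 'k"
  assumes grp: "group G" and fin: "finite (carrier G)" and reps: "\<forall>i<m. is_rep G (I i) (\<rho> i)"
    and l: "l < m" and finS: "finite S" and not_rank: "\<not> row_rank_le k S (tidx m I) (flattening I Ql l \<omega>)"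
    and n: "Suc k \<le> n"
  shows "\<exists>\<phi>. (\<forall>i<m. glin G (I i) (\<rho> i) (reg_idx G n) (reg_rep G) (\<phi> i)) \<and>
           \<not> border_rank_le m (\<lambda>_. reg_idx G n) k (tensor_map m I (\<lambda>_. reg_idx G n) \<phi> \<omega>)"
proof -
  interpret group G by fact
  have finI: "\<forall>i<m. finite (I i)" using reps is_rep_finite by blast
  let ?fl = "flattening I Ql l \<omega>"
  obtain L c where cC: "\<forall>b<Suc k. c b \<in> tidx m I"
    and LM: "\<forall>a<Suc k. \<forall>b<Suc k. (\<Sum>r\<in>S. L a r * ?fl r (c b)) = (if a = b then 1 else 0)"
    using has_unit_minor_if_not_row_rank_le[OF finS not_rank] unfolding has_unit_minor_def by blast
  define fa where "fa a y = (\<Sum>r\<in>S. L a r * Ql r y)" for a y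
  define \<alpha> where "\<alpha> i s x = (if s < Suc k then (if i = l then fa s x else (if x = c s i then 1 else 0)) else 0)"
    for i s x
  define \<phi> where "\<phi> i = to_regular G (I i) (\<rho> i) (\<alpha> i)" for i
  define jj where "jj a b = (\<lambda>i. if i < m then if i = l then (\<one>\<^bsub>G\<^esub>, a) else (\<one>\<^bsub>G\<^esub>, b) else undefined)"
    for a b :: nat
  let ?T = "tensor_map m I (\<lambda>_. reg_idx G n) \<phi> \<omega>"
  have "?T (jj a b) = (if a = b then 1 else 0)" if a: "a < Suc k" and b: "b < Suc k" for a b
  proof -
    have cb: "c b \<in> tidx m I" using cC b by simp
    have jjT: "jj a b \<in> tidx m (\<lambda>_. reg_idx G n)"
      using a b n unfolding jj_def tidx_def reg_idx_def by (auto split: if_splits)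
    have "\<phi> i (jj a b i) (j i) = (if i = l then fa a (j i) else (if j i = c b i then 1 else 0))"
      if j: "j \<in> tidx m I" and i: "i \<in> {..<m}" for j i
    proof -
      have "j i \<in> I i" using j i unfolding tidx_def by auto
      then have "\<phi> i (jj a b i) (j i) = \<alpha> i (if i = l then a else b) (j i)"
        unfolding \<phi>_def jj_def using i to_regular_one[OF grp reps[rule_format]] by (cases "i = l") simp_all
      then show ?thesis unfolding \<alpha>_def using a b by auto
    qed
    then have "?T (jj a b) = (\<Sum>j\<in>tidx m I.
        (\<Prod>i<m. if i = l then fa a (j i) else (if j i = c b i then 1 else 0)) * \<omega> j)"
      unfolding tensor_map_def using jjT by (auto intro!: sum.cong prod.cong)
    also have "\<dots> = (\<Sum>y\<in>I l. fa a y * \<omega> ((c b)(l:=y)))"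
      by (rule sum_tidx_single_slot[OF finI l cb])
    also have "\<dots> = (\<Sum>r\<in>S. L a r * ?fl r (c b))"
      unfolding fa_def flattening_def sum_distrib_left sum_distrib_right mult.assoc by (rule sum.swap)
    finally show ?thesis using LM a b by simp
  qed
  then have "det (mat (Suc k) (Suc k) (\<lambda>(a,b). ?T (jj a b))) = det (1\<^sub>m (Suc k))"
    by (intro arg_cong[where f=det] eq_matI) auto
  then have "\<not> border_rank_le m (\<lambda>_. reg_idx G n) k ?T"
    using flattening_minor_zero_if_border_rank_le[OF l, of "\<lambda>_. reg_idx G n" k ?T "\<lambda>a. (\<one>\<^bsub>G\<^esub>, a)" "\<lambda>b i. (\<one>\<^bsub>G\<^esub>, b)"] n
    unfolding jj_def reg_idx_def by auto
  moreover have "\<forall>i<m. glin G (I i) (\<rho> i) (reg_idx G n) (reg_rep G) (\<phi> i)"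
    unfolding \<phi>_def using glin_to_regular[OF grp fin] reps by blast
  ultimately show ?thesis by blast
qed

definition isotypic_rank_le :: "('g,'c) monoid_scheme \<Rightarrow> nat \<Rightarrow> (nat \<Rightarrow> 'b set) \<Rightarrow> (nat \<Rightarrow> nat)
    \<Rightarrow> (nat \<Rightarrow> nat \<Rightarrow> 'b \<Rightarrow> 'k) \<Rightarrow> (nat \<Rightarrow> nat \<Rightarrow> 'g \<Rightarrow> 'k) \<Rightarrow> nat \<Rightarrow> ((nat \<Rightarrow> 'b) \<Rightarrow> 'k::field) \<Rightarrow> bool" where
  "isotypic_rank_le G m I d Q \<chi> n \<omega> \<longleftrightarrow> (\<forall>l<m. \<forall>t<d l.
     row_rank_le n (char_class G (d l) (\<chi> l) t) (tidx m I) (flattening I (Q l) l \<omega>))"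

lemma isotypic_rank_le_mono:
  "isotypic_rank_le G m I d Q \<chi> k \<omega> \<Longrightarrow> k \<le> n \<Longrightarrow> isotypic_rank_le G m I d Q \<chi> n \<omega>"
  unfolding isotypic_rank_le_def using row_rank_le_mono by blast

lemma isotypic_rank_le_if_regular_images:
  assumes grp: "group G" and fin: "finite (carrier G)" and reps: "\<forall>i<m. is_rep G (I i) (\<rho> i)"
    and n: "Suc k \<le> n"
    and images: "\<forall>\<phi>. (\<forall>i<m. glin G (I i) (\<rho> i) (reg_idx G n) (reg_rep G) (\<phi> i)) \<longrightarrow>
       border_rank_le m (\<lambda>_. reg_idx G n) k (tensor_map m I (\<lambda>_. reg_idx G n) \<phi> \<omega>)"
  shows "isotypic_rank_le G m I d Q \<chi> k \<omega>"
  unfolding isotypic_rank_le_def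
proof (intro allI impI)
  fix l t assume "l < m" "t < d l"
  have "finite (char_class G (d l) (\<chi> l) t)"
    by (rule finite_subset[OF char_class_subset]) simp
  then show "row_rank_le k (char_class G (d l) (\<chi> l) t) (tidx m I) (flattening I (Q l) l \<omega>)"
    using regular_image_not_border_rank_le[OF grp fin reps \<open>l < m\<close> _ _ n] images by blast
qed

definition factors_through_regular :: "('g,'c) monoid_scheme \<Rightarrow> nat \<Rightarrow> (nat \<Rightarrow> 'b set)
    \<Rightarrow> (nat \<Rightarrow> 'g \<Rightarrow> 'b \<Rightarrow> 'b \<Rightarrow> 'k::field) \<Rightarrow> nat \<Rightarrow> ((nat \<Rightarrow> 'b) \<Rightarrow> 'k) \<Rightarrow> bool" where
  "factors_through_regular G m I \<rho> n \<omega> \<longleftrightarrow> (\<exists>\<phi> \<psi>.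
     (\<forall>i<m. glin G (I i) (\<rho> i) (reg_idx G n) (reg_rep G) (\<phi> i)) \<and>
     (\<forall>i<m. glin G (reg_idx G n) (reg_rep G) (I i) (\<rho> i) (\<psi> i)) \<and>
     tensor_map m (\<lambda>_. reg_idx G n) I \<psi> (tensor_map m I (\<lambda>_. reg_idx G n) \<phi> \<omega>) = \<omega>)"

lemma factors_through_regular_if_isotypic_rank_le:
  fixes \<rho> :: "nat \<Rightarrow> 'g \<Rightarrow> 'b \<Rightarrow> 'b \<Rightarrow> 'k::field"
  assumes cg: "comm_group G" and fin: "finite (carrier G)" and N: "of_nat (card (carrier G)) \<noteq> (0::'k)"
    and reps: "\<forall>i<m. is_rep G (I i) (\<rho> i)"
    and eb: "\<forall>i<m. eigenbasis G (I i) (\<rho> i) (d i) (P i) (Q i) (\<chi> i)"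
    and w: "\<omega> \<in> tensor_space m I" and ranks: "isotypic_rank_le G m I d Q \<chi> n \<omega>"
  shows "factors_through_regular G m I \<rho> n \<omega>"
proof -
  have grp: "group G" using cg by (simp add: comm_group_def)
  have finI: "\<forall>i<m. finite (I i)" using reps is_rep_finite by blast
  have "\<forall>l\<in>{..<m}. \<exists>au. tensor_map m I I (\<lambda>i. if i = l
      then (\<lambda>b a. \<Sum>c\<in>reg_idx G n. from_regular G (I l) (\<rho> l) (snd au) b c * to_regular G (I l) (\<rho> l) (fst au) c a)
      else id_matrix) \<omega> = \<omega>"
  proof
    fix l assume "l \<in> {..<m}"
    then have l: "l < m" by simp
    have "\<forall>t<d l. row_rank_le n (char_class G (d l) (\<chi> l) t) (tidx m I) (flattening I (Q l) l \<omega>)"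
      using ranks l unfolding isotypic_rank_le_def by simp
    then obtain \<alpha> u where "tensor_map m I I (\<lambda>i. if i = l
      then (\<lambda>b a. \<Sum>c\<in>reg_idx G n. from_regular G (I l) (\<rho> l) u b c * to_regular G (I l) (\<rho> l) \<alpha> c a)
      else id_matrix) \<omega> = \<omega>"
      using slot_factors_through_regular[OF cg fin N finI l w reps[rule_format, OF l] eb[rule_format, OF l]]
      by blast
    then show "\<exists>au. tensor_map m I I (\<lambda>i. if i = l
      then (\<lambda>b a. \<Sum>c\<in>reg_idx G n. from_regular G (I l) (\<rho> l) (snd au) b c * to_regular G (I l) (\<rho> l) (fst au) c a)
      else id_matrix) \<omega> = \<omega>"
      by (intro exI[of _ "(\<alpha>, u)"]) (simp only: fst_conv snd_conv)
  qed
  then obtain au where au: "\<forall>l\<in>{..<m}. tensor_map m I I (\<lambda>i. if i = l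
      then (\<lambda>b a. \<Sum>c\<in>reg_idx G n. from_regular G (I l) (\<rho> l) (snd (au l)) b c * to_regular G (I l) (\<rho> l) (fst (au l)) c a)
      else id_matrix) \<omega> = \<omega>"
    by (rule bchoice[THEN exE])
  define \<phi> where "\<phi> i = to_regular G (I i) (\<rho> i) (fst (au i))" for i
  define \<psi> where "\<psi> i = from_regular G (I i) (\<rho> i) (snd (au i))" for i
  have "tensor_map m I I (\<lambda>i b a. \<Sum>c\<in>reg_idx G n. \<psi> i b c * \<phi> i c a) \<omega> = \<omega>"
    using au unfolding \<phi>_def \<psi>_def by (intro tensor_map_fixes_if_slotwise[OF finI w]) simp
  then have "tensor_map m (\<lambda>_. reg_idx G n) I \<psi> (tensor_map m I (\<lambda>_. reg_idx G n) \<phi> \<omega>) = \<omega>"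
    by (subst tensor_map_tensor_map) (simp_all add: finite_reg_idx[OF fin])
  moreover have "\<forall>i<m. glin G (I i) (\<rho> i) (reg_idx G n) (reg_rep G) (\<phi> i)"
    unfolding \<phi>_def using glin_to_regular[OF grp fin] reps by blast
  moreover have "\<forall>i<m. glin G (reg_idx G n) (reg_rep G) (I i) (\<rho> i) (\<psi> i)"
    unfolding \<psi>_def using glin_from_regular[OF grp fin] reps by blast
  ultimately show ?thesis unfolding factors_through_regular_def by blast
qed

lemma eigenbases_exist:
  fixes \<rho> :: "nat \<Rightarrow> 'g \<Rightarrow> 'b \<Rightarrow> 'b \<Rightarrow> 'k::field"
  assumes K_split: "\<forall>d (\<sigma> :: 'g \<Rightarrow> nat \<Rightarrow> nat \<Rightarrow> 'k). is_rep G {..<d} \<sigma> \<longrightarrow> splits_into_lines G d \<sigma>"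
    and reps: "\<forall>i<m. is_rep G (I i) (\<rho> i)"
  shows "\<exists>d P Q \<chi>. \<forall>i<m. eigenbasis G (I i) (\<rho> i) (d i) (P i) (Q i) (\<chi> i)"
proof -
  have choice: "\<forall>i\<in>{..<m}. \<exists>D. eigenbasis G (I i) (\<rho> i) (fst D) (fst (snd D)) (fst (snd (snd D))) (snd (snd (snd D)))"
    using eigenbasis_exists[OF K_split] reps by fastforce
  obtain D where "\<forall>i\<in>{..<m}. eigenbasis G (I i) (\<rho> i)
      (fst (D i)) (fst (snd (D i))) (fst (snd (snd (D i)))) (snd (snd (snd (D i))))"
    using bchoice[OF choice] by (rule exE)
  then show ?thesis by (intro exI[of _ "\<lambda>i. fst (D i)"] exI[of _ "\<lambda>i. fst (snd (D i))"]
      exI[of _ "\<lambda>i. fst (snd (snd (D i)))"] exI[of _ "\<lambda>i. snd (snd (snd (D i)))"]) simp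
qed

lemma factors_through_regular_if_regular_images:
  fixes \<rho> :: "nat \<Rightarrow> 'g \<Rightarrow> 'b \<Rightarrow> 'b \<Rightarrow> 'k::field"
  assumes cg: "comm_group G" and fin: "finite (carrier G)"
    and K_split: "\<forall>d (\<sigma> :: 'g \<Rightarrow> nat \<Rightarrow> nat \<Rightarrow> 'k). is_rep G {..<d} \<sigma> \<longrightarrow> splits_into_lines G d \<sigma>"
    and reps: "\<forall>i<m. is_rep G (I i) (\<rho> i)" and w: "\<omega> \<in> tensor_space m I"
    and n': "Suc k \<le> n'" and n: "k \<le> n"
    and images: "\<forall>\<phi>. (\<forall>i<m. glin G (I i) (\<rho> i) (reg_idx G n') (reg_rep G) (\<phi> i)) \<longrightarrow>
       border_rank_le m (\<lambda>_. reg_idx G n') k (tensor_map m I (\<lambda>_. reg_idx G n') \<phi> \<omega>)"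
  shows "factors_through_regular G m I \<rho> n \<omega>"
proof -
  have grp: "group G" using cg by (simp add: comm_group_def)
  obtain d P Q \<chi> where eb: "\<forall>i<m. eigenbasis G (I i) (\<rho> i) (d i) (P i) (Q i) (\<chi> i)"
    using eigenbases_exist[OF K_split reps] by blast
  have "isotypic_rank_le G m I d Q \<chi> n \<omega>"
    using isotypic_rank_le_mono[OF isotypic_rank_le_if_regular_images[OF grp fin reps n' images] n] .
  then show ?thesis
    using factors_through_regular_if_isotypic_rank_le[OF cg fin card_carrier_neq_zero[OF grp fin K_split] reps eb w]
    by blast
qed

lemma rank_le_iff_regular_images:
  fixes \<rho> :: "nat \<Rightarrow> 'g \<Rightarrow> 'b \<Rightarrow> 'b \<Rightarrow> 'k::field"
  assumes cg: "comm_group G" and fin: "finite (carrier G)"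
    and K_split: "\<forall>d (\<sigma> :: 'g \<Rightarrow> nat \<Rightarrow> nat \<Rightarrow> 'k). is_rep G {..<d} \<sigma> \<longrightarrow> splits_into_lines G d \<sigma>"
    and reps: "\<forall>i<m. is_rep G (I i) (\<rho> i)" and w: "\<omega> \<in> tensor_space m I" and n: "Suc k \<le> n"
  shows "rank_le m I k \<omega> \<longleftrightarrow>
    (\<forall>\<phi>. (\<forall>i<m. glin G (I i) (\<rho> i) (reg_idx G n) (reg_rep G) (\<phi> i)) \<longrightarrow>
       rank_le m (\<lambda>_. reg_idx G n) k (tensor_map m I (\<lambda>_. reg_idx G n) \<phi> \<omega>))"
    (is "_ \<longleftrightarrow> ?images")
proof
  show "rank_le m I k \<omega> \<Longrightarrow> ?images"
    using rank_le_tensor_map reps is_rep_finite by blast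
next
  assume images: ?images
  then have "\<forall>\<phi>. (\<forall>i<m. glin G (I i) (\<rho> i) (reg_idx G n) (reg_rep G) (\<phi> i)) \<longrightarrow>
       border_rank_le m (\<lambda>_. reg_idx G n) k (tensor_map m I (\<lambda>_. reg_idx G n) \<phi> \<omega>)"
    using rank_le_imp_border_rank_le by blast
  then have "factors_through_regular G m I \<rho> n \<omega>"
    using factors_through_regular_if_regular_images[OF cg fin K_split reps w n] n by simp
  then obtain \<phi> \<psi> where "\<forall>i<m. glin G (I i) (\<rho> i) (reg_idx G n) (reg_rep G) (\<phi> i)"
    and round_trip: "tensor_map m (\<lambda>_. reg_idx G n) I \<psi> (tensor_map m I (\<lambda>_. reg_idx G n) \<phi> \<omega>) = \<omega>"
    unfolding factors_through_regular_def by blast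
  then have "rank_le m (\<lambda>_. reg_idx G n) k (tensor_map m I (\<lambda>_. reg_idx G n) \<phi> \<omega>)"
    using images by blast
  then show "rank_le m I k \<omega>"
    using rank_le_tensor_map[of m "\<lambda>_. reg_idx G n"] finite_reg_idx[OF fin] round_trip by metis
qed

lemma border_rank_le_iff_regular_images:
  fixes \<rho> :: "nat \<Rightarrow> 'g \<Rightarrow> 'b \<Rightarrow> 'b \<Rightarrow> 'k::field"
  assumes cg: "comm_group G" and fin: "finite (carrier G)"
    and K_split: "\<forall>d (\<sigma> :: 'g \<Rightarrow> nat \<Rightarrow> nat \<Rightarrow> 'k). is_rep G {..<d} \<sigma> \<longrightarrow> splits_into_lines G d \<sigma>"
    and reps: "\<forall>i<m. is_rep G (I i) (\<rho> i)" and w: "\<omega> \<in> tensor_space m I" and n: "Suc k \<le> n"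
  shows "border_rank_le m I k \<omega> \<longleftrightarrow>
    (\<forall>\<phi>. (\<forall>i<m. glin G (I i) (\<rho> i) (reg_idx G n) (reg_rep G) (\<phi> i)) \<longrightarrow>
       border_rank_le m (\<lambda>_. reg_idx G n) k (tensor_map m I (\<lambda>_. reg_idx G n) \<phi> \<omega>))"
    (is "_ \<longleftrightarrow> ?images")
proof
  show "border_rank_le m I k \<omega> \<Longrightarrow> ?images"
    using border_rank_le_tensor_map reps is_rep_finite by blast
next
  assume images: ?images
  then have "factors_through_regular G m I \<rho> n \<omega>"
    using factors_through_regular_if_regular_images[OF cg fin K_split reps w n] n by simp
  then obtain \<phi> \<psi> where "\<forall>i<m. glin G (I i) (\<rho> i) (reg_idx G n) (reg_rep G) (\<phi> i)"
    and round_trip: "tensor_map m (\<lambda>_. reg_idx G n) I \<psi> (tensor_map m I (\<lambda>_. reg_idx G n) \<phi> \<omega>) = \<omega>"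
    unfolding factors_through_regular_def by blast
  then have "border_rank_le m (\<lambda>_. reg_idx G n) k (tensor_map m I (\<lambda>_. reg_idx G n) \<phi> \<omega>)"
    using images by blast
  then show "border_rank_le m I k \<omega>"
    using border_rank_le_tensor_map[of m "\<lambda>_. reg_idx G n"] finite_reg_idx[OF fin] round_trip by metis
qed

lemma factors_through_regular_if_border_rank_le:
  fixes \<rho> :: "nat \<Rightarrow> 'g \<Rightarrow> 'b \<Rightarrow> 'b \<Rightarrow> 'k::field"
  assumes cg: "comm_group G" and fin: "finite (carrier G)"
    and K_split: "\<forall>d (\<sigma> :: 'g \<Rightarrow> nat \<Rightarrow> nat \<Rightarrow> 'k). is_rep G {..<d} \<sigma> \<longrightarrow> splits_into_lines G d \<sigma>"
    and reps: "\<forall>i<m. is_rep G (I i) (\<rho> i)" and w: "\<omega> \<in> tensor_space m I"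
    and br: "border_rank_le m I k \<omega>"
  shows "factors_through_regular G m I \<rho> k \<omega>"
  using factors_through_regular_if_regular_images[OF cg fin K_split reps w le_refl le_refl]
    border_rank_le_tensor_map[OF _ br] reps is_rep_finite by blast

theorem lemma3p1:
  fixes G :: "('g, 'c) monoid_scheme"
    and I :: "nat \<Rightarrow> 'b set"
    and \<rho> :: "nat \<Rightarrow> 'g \<Rightarrow> 'b \<Rightarrow> 'b \<Rightarrow> 'k::field"
    and m k n :: nat
  assumes G: "comm_group G" "finite (carrier G)"
    and K_inf: "infinite (UNIV :: 'k set)"
    and K_split: "\<forall>d (\<sigma> :: 'g \<Rightarrow> nat \<Rightarrow> nat \<Rightarrow> 'k). is_rep G {..<d} \<sigma> \<longrightarrow> splits_into_lines G d \<sigma>"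
    and reps: "\<forall>i<m. is_rep G (I i) (\<rho> i)"
    and n: "n \<ge> k + 1"
  shows "(\<forall>\<omega> \<in> tensor_space m I.
           (rank_le m I k \<omega> \<longleftrightarrow>
             (\<forall>\<phi>. (\<forall>i<m. glin G (I i) (\<rho> i) (reg_idx G n) (reg_rep G) (\<phi> i)) \<longrightarrow>
                  rank_le m (\<lambda>_. reg_idx G n) k (tensor_map m I (\<lambda>_. reg_idx G n) \<phi> \<omega>))) \<and>
           (border_rank_le m I k \<omega> \<longleftrightarrow>
             (\<forall>\<phi>. (\<forall>i<m. glin G (I i) (\<rho> i) (reg_idx G n) (reg_rep G) (\<phi> i)) \<longrightarrow>
                  border_rank_le m (\<lambda>_. reg_idx G n) k (tensor_map m I (\<lambda>_. reg_idx G n) \<phi> \<omega>))) \<and>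
           (border_rank_le m I k \<omega> \<longrightarrow>
             (\<exists>\<phi> \<psi>. (\<forall>i<m. glin G (I i) (\<rho> i) (reg_idx G k) (reg_rep G) (\<phi> i)) \<and>
                    (\<forall>i<m. glin G (reg_idx G k) (reg_rep G) (I i) (\<rho> i) (\<psi> i)) \<and>
                    tensor_map m (\<lambda>_. reg_idx G k) I \<psi> (tensor_map m I (\<lambda>_. reg_idx G k) \<phi> \<omega>) = \<omega>)))"
proof -
  have n': "Suc k \<le> n" using n by simp
  show ?thesis
    using rank_le_iff_regular_images[OF G K_split reps _ n']
      border_rank_le_iff_regular_images[OF G K_split reps _ n']
      factors_through_regular_if_border_rank_le[OF G K_split reps]
    unfolding factors_through_regular_def by blast
qed

end
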